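(* Let $V\in\mathcal{H}^{r\times n}$ and $Y\in\mathcal{H}^{n\times r}$ be left and right canonical matrices, respectively, for $T$ at $\lambda_0$. Then $VTY$ is invertible (as a meromorphic matrix), and $\Delta^{-1}VTY\Delta^{-1}\doteq\Delta^{-1}$ holds if and only if $(VTY)^{-1}\doteq\Delta^{-1}$.
   Context: Let $\Omega\subset\mathbb{C}$ be open and $\lambda_0\in\Omega$ fixed. $\mathcal{H}$ denotes the ring of holomorphic functions on $\Omega$, and $\mathcal{H}_0$ the ring of functions holomorphic in some neighborhood of $\lambda_0$. Write $\chi_0(\lambda)=\lambda-\lambda_0$. A matrix $M\in\mathcal{H}_0^{n\times n}$ is unimodular if it has an inverse in $\mathcal{H}_0^{n\times n}$. For meromorphic matrices $M_1,M_2$ of equal size, $M_1\doteq M_2$ means that $M_2-M_1$ is holomorphic in a neighborhood of $\lambda_0$. Throughout, $T\in\mathcal{H}^{n\times n}$ with $\det T$ not identically zero and $\det T(\lambda_0)=0$, and $r=\dim\ker T(\lambda_0)$. There exist unimodular $U_L,U_R\in\mathcal{H}_0^{n\times n}$ and uniquely determined integers $m_1\ge\cdots\ge m_n\ge 0$ (the partial multiplicities) with $U_LTU_R=\mathrm{diag}(\chi_0^{m_1},\dots,\chi_0^{m_n})$; $m_i>0$ exactly for $i\le r$. Set $\Delta=\mathrm{diag}(\chi_0^{m_1},\dots,\chi_0^{m_r})$. A root function for $T$ at $\lambda_0$ is $y\in\mathcal{H}^n$ with $y(\lambda_0)\neq0$ and $T(\lambda_0)y(\lambda_0)=0$; its multiplicity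 $\nu(y)$ is the order of the zero of $Ty$ at $\lambda_0$. A right canonical matrix for $T$ at $\lambda_0$ is $Y\in\mathcal{H}^{n\times r}$ whose columns $y_1,\dots,y_r$ are root functions such that (a) $y_1(\lambda_0),\dots,y_r(\lambda_0)$ are linearly independent, (b) $\sum_{i=1}^r\nu(y_i)=\sum_{i=1}^r m_i$, (c) $\nu(y_1)\ge\cdots\ge\nu(y_r)$. A left root function is a row vector $v\in\mathcal{H}^{1\times n}$ with $v(\lambda_0)\ne0$ and $v(\lambda_0)T(\lambda_0)=0$, with multiplicity the order of the zero of $vT$ at $\lambda_0$; a left canonical matrix $V\in\mathcal{H}^{r\times n}$ is defined analogously. *)

theory Defs
  imports "HOL-Analysis.Analysis" "Jordan_Normal_Form.Matrix_Kernel" "Jordan_Normal_Form.Determinant"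
begin

definition mat_holo :: "complex set \<Rightarrow> nat \<Rightarrow> nat \<Rightarrow> (complex \<Rightarrow> complex mat) \<Rightarrow> bool" where
  "mat_holo S r c A \<longleftrightarrow> (\<forall>z. A z \<in> carrier_mat r c) \<and>
     (\<forall>i<r. \<forall>j<c. (\<lambda>z. A z $$ (i,j)) holomorphic_on S)"

definition vec_holo :: "complex set \<Rightarrow> nat \<Rightarrow> (complex \<Rightarrow> complex vec) \<Rightarrow> bool" where
  "vec_holo S n f \<longleftrightarrow> (\<forall>z. f z \<in> carrier_vec n) \<and> (\<forall>i<n. (\<lambda>z. f z $ i) holomorphic_on S)"

definition vec_zero_order :: "complex \<Rightarrow> nat \<Rightarrow> (complex \<Rightarrow> complex vec) \<Rightarrow> enat" where
  "vec_zero_order l0 n f = Sup {enat k | k. \<exists>e>0. \<exists>h. vec_holo (ball l0 e) n h \<and>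
       (\<forall>z\<in>ball l0 e. f z = (z - l0)^k \<cdot>\<^sub>v h z)}"

definition unimodular_at :: "complex \<Rightarrow> nat \<Rightarrow> (complex \<Rightarrow> complex mat) \<Rightarrow> bool" where
  "unimodular_at l0 n U \<longleftrightarrow> (\<exists>e>0. \<exists>W. mat_holo (ball l0 e) n n U \<and> mat_holo (ball l0 e) n n W \<and>
       (\<forall>z\<in>ball l0 e. U z * W z = 1\<^sub>m n \<and> W z * U z = 1\<^sub>m n))"

definition diag_fun :: "nat \<Rightarrow> (nat \<Rightarrow> complex) \<Rightarrow> complex mat" where
  "diag_fun r d = mat r r (\<lambda>(i,j). if i = j then d i else 0)"

text \<open>m (indices 0..n-1) are the partial multiplicities of T at l0: decreasing, and
  U_L T U_R = diag((z-l0)^m_0,...,(z-l0)^m_(n-1)) near l0 with U_L, U_R unimodular.\<close>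

definition partial_multiplicities :: "complex \<Rightarrow> nat \<Rightarrow> (complex \<Rightarrow> complex mat) \<Rightarrow> (nat \<Rightarrow> nat) \<Rightarrow> bool" where
  "partial_multiplicities l0 n T m \<longleftrightarrow>
     (\<forall>i j. i \<le> j \<longrightarrow> j < n \<longrightarrow> m j \<le> m i) \<and>
     (\<exists>UL UR. unimodular_at l0 n UL \<and> unimodular_at l0 n UR \<and>
        (\<exists>e>0. \<forall>z\<in>ball l0 e. UL z * T z * UR z = diag_fun n (\<lambda>i. (z - l0) ^ m i)))"

definition root_function :: "complex set \<Rightarrow> complex \<Rightarrow> nat \<Rightarrow> (complex \<Rightarrow> complex mat) \<Rightarrow> (complex \<Rightarrow> complex vec) \<Rightarrow> bool" where
  "root_function \<Omega> l0 n T y \<longleftrightarrow> vec_holo \<Omega> n y \<and> y l0 \<noteq> 0\<^sub>v n \<and> T l0 *\<^sub>v y l0 = 0\<^sub>v n"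

definition root_mult :: "complex \<Rightarrow> nat \<Rightarrow> (complex \<Rightarrow> complex mat) \<Rightarrow> (complex \<Rightarrow> complex vec) \<Rightarrow> enat" where
  "root_mult l0 n T y = vec_zero_order l0 n (\<lambda>z. T z *\<^sub>v y z)"

definition left_root_function :: "complex set \<Rightarrow> complex \<Rightarrow> nat \<Rightarrow> (complex \<Rightarrow> complex mat) \<Rightarrow> (complex \<Rightarrow> complex vec) \<Rightarrow> bool" where
  "left_root_function \<Omega> l0 n T v \<longleftrightarrow> vec_holo \<Omega> n v \<and> v l0 \<noteq> 0\<^sub>v n \<and> transpose_mat (T l0) *\<^sub>v v l0 = 0\<^sub>v n"

definition left_root_mult :: "complex \<Rightarrow> nat \<Rightarrow> (complex \<Rightarrow> complex mat) \<Rightarrow> (complex \<Rightarrow> complex vec) \<Rightarrow> enat" where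
  "left_root_mult l0 n T v = vec_zero_order l0 n (\<lambda>z. transpose_mat (T z) *\<^sub>v v z)"

text \<open>Right canonical matrix Y (n x r); its columns are y_i = col (Y z) i.
  Condition (a) (linear independence of the columns of Y l0) is written out literally.
  Indices run over 0..r-1.\<close>

definition right_canonical :: "complex set \<Rightarrow> complex \<Rightarrow> nat \<Rightarrow> (complex \<Rightarrow> complex mat) \<Rightarrow> (nat \<Rightarrow> nat) \<Rightarrow> (complex \<Rightarrow> complex mat) \<Rightarrow> bool" where
  "right_canonical \<Omega> l0 n T m Y \<longleftrightarrow>
     (let r = kernel_dim (T l0); y = (\<lambda>i z. col (Y z) i) in
       mat_holo \<Omega> n r Y \<and>
       (\<forall>i<r. root_function \<Omega> l0 n T (y i)) \<and>
       (\<forall>c\<in>carrier_vec r. Y l0 *\<^sub>v c = 0\<^sub>v n \<longrightarrow> c = 0\<^sub>v r) \<and>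
       (\<Sum>i<r. root_mult l0 n T (y i)) = enat (\<Sum>i<r. m i) \<and>
       (\<forall>i j. i \<le> j \<longrightarrow> j < r \<longrightarrow> root_mult l0 n T (y j) \<le> root_mult l0 n T (y i)))"

definition left_canonical :: "complex set \<Rightarrow> complex \<Rightarrow> nat \<Rightarrow> (complex \<Rightarrow> complex mat) \<Rightarrow> (nat \<Rightarrow> nat) \<Rightarrow> (complex \<Rightarrow> complex mat) \<Rightarrow> bool" where
  "left_canonical \<Omega> l0 n T m V \<longleftrightarrow>
     (let r = kernel_dim (T l0); v = (\<lambda>i z. row (V z) i) in
       mat_holo \<Omega> r n V \<and>
       (\<forall>i<r. left_root_function \<Omega> l0 n T (v i)) \<and>
       (\<forall>c\<in>carrier_vec r. transpose_mat (V l0) *\<^sub>v c = 0\<^sub>v n \<longrightarrow> c = 0\<^sub>v r) \<and>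
       (\<Sum>i<r. left_root_mult l0 n T (v i)) = enat (\<Sum>i<r. m i) \<and>
       (\<forall>i j. i \<le> j \<longrightarrow> j < r \<longrightarrow> left_root_mult l0 n T (v j) \<le> left_root_mult l0 n T (v i)))"

text \<open>Pointwise inverse of a square matrix (adjugate formula); it is the inverse
  wherever the determinant is nonzero, which is all that matters for meromorphic
  matrices near l0.\<close>

definition mat_inv :: "complex mat \<Rightarrow> complex mat" where
  "mat_inv A = inverse (det A) \<cdot>\<^sub>m adj_mat A"

text \<open>M1 is congruent to M2 at l0 (M1 \<doteq> M2): M2 - M1 is (after removing the
  singularity) holomorphic in a neighbourhood of l0, i.e. every entry of M2 - M1 agrees
  on a punctured disc around l0 with a function holomorphic on the full disc.\<close>

definition mero_congr :: "complex \<Rightarrow> nat \<Rightarrow> nat \<Rightarrow> (complex \<Rightarrow> complex mat) \<Rightarrow> (complex \<Rightarrow> complex mat) \<Rightarrow> bool" where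
  "mero_congr l0 r c M1 M2 \<longleftrightarrow> (\<exists>e>0. \<forall>i<r. \<forall>j<c. \<exists>h. h holomorphic_on ball l0 e \<and>
       (\<forall>z\<in>ball l0 e - {l0}. M2 z $$ (i,j) - M1 z $$ (i,j) = h z))"

text \<open>A meromorphic matrix (near l0) is invertible iff its determinant is not
  identically zero near l0, i.e. nonzero on a punctured neighbourhood.\<close>

definition mero_invertible :: "complex \<Rightarrow> (complex \<Rightarrow> complex mat) \<Rightarrow> bool" where
  "mero_invertible l0 M \<longleftrightarrow> (\<forall>\<^sub>F z in at l0. det (M z) \<noteq> 0)"

end

theory Submission
  imports Defs
begin

text \<open>
  Near \<open>l0\<close> write \<open>T = W\<^sub>L D W\<^sub>R\<close> with \<open>D = diag ((z - l0) ^ m i)\<close> and \<open>W\<^sub>L, W\<^sub>R\<close>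
  unimodular. For a right canonical \<open>Y\<close> put \<open>Y' = W\<^sub>R Y\<close>; the \<open>j\<close>-th entry of
  \<open>D Y'\<close> in column \<open>q\<close> vanishes to the order \<open>\<nu>\<^sub>q\<close> of the \<open>q\<close>-th root function,
  so \<open>Y'(l0)\<close> is zero wherever \<open>m\<^sub>j < \<nu>\<^sub>q\<close>. Since the columns of \<open>Y'(l0)\<close> are
  independent, this zero pattern forces \<open>\<nu>\<^sub>q \<le> m\<^sub>q\<close>, and the sum condition gives
  \<open>\<nu>\<^sub>q = m\<^sub>q\<close>. Hence \<open>D Y' = G \<Delta>\<close> with \<open>G\<close> holomorphic, and \<open>G(l0)\<close> is
  nonsingular because its upper block is conjugate to that of \<open>Y'(l0)\<close> by \<open>\<Delta>\<close>.
  Dually \<open>V W\<^sub>L\<close> vanishes at \<open>l0\<close> outside its first \<open>r\<close> columns and is nonsingular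
  there. So \<open>V T Y = X \<Delta>\<close> with \<open>X = V W\<^sub>L G\<close> holomorphic and invertible at \<open>l0\<close>;
  then \<open>\<Delta>\<^sup>-\<^sup>1 V T Y \<Delta>\<^sup>-\<^sup>1 = \<Delta>\<^sup>-\<^sup>1 X\<close> and \<open>(V T Y)\<^sup>-\<^sup>1 = \<Delta>\<^sup>-\<^sup>1 X\<^sup>-\<^sup>1\<close>,
  and multiplying a congruence on the right by the holomorphic \<open>X\<^sup>-\<^sup>1\<close> (resp. \<open>X\<close>)
  turns \<open>\<Delta>\<^sup>-\<^sup>1 X \<doteq> \<Delta>\<^sup>-\<^sup>1\<close> into \<open>\<Delta>\<^sup>-\<^sup>1 \<doteq> \<Delta>\<^sup>-\<^sup>1 X\<^sup>-\<^sup>1\<close> (resp. back).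
\<close>

no_notation vec_nth (infixl "$" 90)

section \<open>Germs of holomorphic functions\<close>

definition vanishes_to_order :: "complex \<Rightarrow> nat \<Rightarrow> (complex \<Rightarrow> complex) \<Rightarrow> bool" where
  "vanishes_to_order l0 k f \<longleftrightarrow> (\<exists>g. g analytic_on {l0} \<and> (\<forall>\<^sub>F z in nhds l0. f z = (z - l0) ^ k * g z))"

definition removable_at :: "complex \<Rightarrow> (complex \<Rightarrow> complex) \<Rightarrow> bool" where
  "removable_at l0 f \<longleftrightarrow> (\<exists>g. g analytic_on {l0} \<and> (\<forall>\<^sub>F z in at l0. f z = g z))"

lemma eventually_at_if_nhds: "eventually P (nhds x) \<Longrightarrow> eventually P (at x within S)"
  unfolding eventually_at_filter by (auto elim: eventually_mono)

lemma analytic_at_eq_if_eventually_eq: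
  assumes "f analytic_on {l0}" "g analytic_on {l0}" "\<forall>\<^sub>F z in at l0. f z = g z"
  shows "f l0 = g l0"
proof -
  have "(f \<longlongrightarrow> f l0) (at l0)" "(g \<longlongrightarrow> g l0) (at l0)"
    using assms(1,2) by (simp_all add: analytic_at_imp_isCont isContD)
  hence "(f \<longlongrightarrow> g l0) (at l0)" using assms(3) by (simp add: tendsto_cong)
  with \<open>(f \<longlongrightarrow> f l0) (at l0)\<close> show ?thesis by (rule tendsto_unique[OF at_neq_bot])
qed

lemma vanishes_to_order_0: "f analytic_on {l0} \<Longrightarrow> vanishes_to_order l0 0 f"
  unfolding vanishes_to_order_def by auto

lemma vanishes_to_order_mono:
  assumes "vanishes_to_order l0 k f" "k' \<le> k"
  shows "vanishes_to_order l0 k' f"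
proof -
  obtain g where g: "g analytic_on {l0}" "\<forall>\<^sub>F z in nhds l0. f z = (z - l0) ^ k * g z"
    using assms(1) unfolding vanishes_to_order_def by blast
  have "\<forall>\<^sub>F z in nhds l0. f z = (z - l0) ^ k' * ((z - l0) ^ (k - k') * g z)"
    using g(2) by eventually_elim (use assms(2) in \<open>simp flip: power_add mult.assoc\<close>)
  moreover have "(\<lambda>z. (z - l0) ^ (k - k') * g z) analytic_on {l0}"
    using g(1) by (intro analytic_intros)
  ultimately show ?thesis unfolding vanishes_to_order_def by blast
qed

lemma vanishes_to_order_cong:
  assumes "vanishes_to_order l0 k f" "\<forall>\<^sub>F z in nhds l0. f z = f' z"
  shows "vanishes_to_order l0 k f'"
proof -
  obtain g where g: "g analytic_on {l0}" "\<forall>\<^sub>F z in nhds l0. f z = (z - l0) ^ k * g z"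
    using assms(1) unfolding vanishes_to_order_def by blast
  have "\<forall>\<^sub>F z in nhds l0. f' z = (z - l0) ^ k * g z"
    using g(2) assms(2) by eventually_elim simp
  with g(1) show ?thesis unfolding vanishes_to_order_def by blast
qed

lemma vanishes_to_order_sum:
  assumes "\<And>i. i \<in> I \<Longrightarrow> vanishes_to_order l0 k (f i)"
  shows "vanishes_to_order l0 k (\<lambda>z. \<Sum>i\<in>I. f i z)"
proof -
  have "\<exists>g. g analytic_on {l0} \<and> (\<forall>\<^sub>F z in nhds l0. f i z = (z - l0) ^ k * g z)" if "i \<in> I" for i
    using assms[OF that] unfolding vanishes_to_order_def .
  then obtain g where g: "\<And>i. i \<in> I \<Longrightarrow> g i analytic_on {l0}"
    "\<And>i. i \<in> I \<Longrightarrow> \<forall>\<^sub>F z in nhds l0. f i z = (z - l0) ^ k * g i z"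
    by metis
  show ?thesis
  proof (cases "finite I")
    case True
    have "\<forall>\<^sub>F z in nhds l0. \<forall>i\<in>I. f i z = (z - l0) ^ k * g i z"
      using True g(2) by (intro eventually_ball_finite) auto
    hence "\<forall>\<^sub>F z in nhds l0. (\<Sum>i\<in>I. f i z) = (z - l0) ^ k * (\<Sum>i\<in>I. g i z)"
      by eventually_elim (simp add: sum_distrib_left)
    moreover have "(\<lambda>z. \<Sum>i\<in>I. g i z) analytic_on {l0}"
      using g(1) by (intro analytic_intros)
    ultimately show ?thesis unfolding vanishes_to_order_def by blast
  qed (auto simp: vanishes_to_order_def intro!: exI[of _ "\<lambda>_. 0"])
qed

lemma vanishes_to_order_mult:
  assumes "a analytic_on {l0}" "vanishes_to_order l0 k f"
  shows "vanishes_to_order l0 k (\<lambda>z. a z * f z)"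
proof -
  obtain g where g: "g analytic_on {l0}" "\<forall>\<^sub>F z in nhds l0. f z = (z - l0) ^ k * g z"
    using assms(2) unfolding vanishes_to_order_def by blast
  have "\<forall>\<^sub>F z in nhds l0. a z * f z = (z - l0) ^ k * (a z * g z)"
    using g(2) by eventually_elim (simp add: algebra_simps)
  moreover have "(\<lambda>z. a z * g z) analytic_on {l0}" using g(1) assms(1) by (intro analytic_intros)
  ultimately show ?thesis unfolding vanishes_to_order_def by blast
qed

lemma vanishes_to_order_Suc_imp_zero:
  assumes "vanishes_to_order l0 (Suc k) (\<lambda>z. (z - l0) ^ k * g z)" "g analytic_on {l0}"
  shows "g l0 = 0"
proof -
  obtain h where h: "h analytic_on {l0}" "\<forall>\<^sub>F z in nhds l0. (z - l0) ^ k * g z = (z - l0) ^ Suc k * h z"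
    using assms(1) unfolding vanishes_to_order_def by blast
  have "\<forall>\<^sub>F z in at l0. (z - l0) ^ k * g z = (z - l0) ^ Suc k * h z \<and> z \<noteq> l0"
    using h(2) unfolding eventually_at_filter by (rule eventually_mono) auto
  hence "\<forall>\<^sub>F z in at l0. g z = (z - l0) * h z"
    by eventually_elim auto
  moreover have "(\<lambda>z. (z - l0) * h z) analytic_on {l0}" using h(1) by (intro analytic_intros)
  ultimately show ?thesis using analytic_at_eq_if_eventually_eq[OF assms(2)] by fastforce
qed

lemma vec_zero_order_vanishes_to_order:
  fixes f :: "complex \<Rightarrow> complex vec"
  assumes "enat k \<le> vec_zero_order l0 n f" "(\<lambda>z. f z $ i) analytic_on {l0}" "i < n"
  shows "vanishes_to_order l0 k (\<lambda>z. f z $ i)"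
proof (cases k)
  case 0 thus ?thesis using vanishes_to_order_0[OF assms(2)] by simp
next
  case (Suc k1)
  hence "enat k1 < vec_zero_order l0 n f" using assms(1) by (metis Suc_ile_eq)
  then obtain k' e h where k': "enat k1 < enat k'" "e > 0" "vec_holo (ball l0 e) n h"
    "\<forall>z\<in>ball l0 e. f z = (z - l0) ^ k' \<cdot>\<^sub>v h z"
    unfolding vec_zero_order_def less_Sup_iff by blast
  have "(\<lambda>z. h z $ i) analytic_on {l0}"
    using k'(2,3) assms(3) unfolding vec_holo_def by (intro holomorphic_on_imp_analytic_at) auto
  moreover have "\<forall>\<^sub>F z in nhds l0. z \<in> ball l0 e"
    using k'(2) by (intro eventually_nhds_in_open) auto
  hence "\<forall>\<^sub>F z in nhds l0. f z $ i = (z - l0) ^ k' * h z $ i"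
  proof eventually_elim
    case (elim z)
    have "h z \<in> carrier_vec n" using k'(3) unfolding vec_holo_def by blast
    thus ?case using k'(4) elim assms(3) by simp
  qed
  ultimately have "vanishes_to_order l0 k' (\<lambda>z. f z $ i)"
    unfolding vanishes_to_order_def by blast
  thus ?thesis using k'(1) Suc by (auto intro: vanishes_to_order_mono)
qed

lemma removable_at_analytic: "f analytic_on {l0} \<Longrightarrow> removable_at l0 f"
  unfolding removable_at_def by auto

lemma removable_at_cong:
  assumes "removable_at l0 f" "\<forall>\<^sub>F z in at l0. f z = f' z"
  shows "removable_at l0 f'"
proof -
  obtain g where g: "g analytic_on {l0}" "\<forall>\<^sub>F z in at l0. f z = g z"
    using assms(1) unfolding removable_at_def by blast
  have "\<forall>\<^sub>F z in at l0. f' z = g z" using g(2) assms(2) by eventually_elim simp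
  with g(1) show ?thesis unfolding removable_at_def by blast
qed

lemma removable_at_uminus: "removable_at l0 f \<Longrightarrow> removable_at l0 (\<lambda>z. - f z)"
  unfolding removable_at_def by (auto intro!: analytic_intros elim!: eventually_mono)

lemma removable_at_mult:
  assumes "removable_at l0 f" "a analytic_on {l0}"
  shows "removable_at l0 (\<lambda>z. f z * a z)"
  using assms unfolding removable_at_def by (auto intro!: analytic_intros elim!: eventually_mono)

lemma removable_at_sum:
  assumes "finite I" "\<And>i. i \<in> I \<Longrightarrow> removable_at l0 (f i)"
  shows "removable_at l0 (\<lambda>z. \<Sum>i\<in>I. f i z)"
  using assms
proof (induction I rule: finite_induct)
  case empty thus ?case by (simp add: removable_at_analytic analytic_on_const)
next
  case (insert x F)
  then obtain g g' where "g analytic_on {l0}" "\<forall>\<^sub>F z in at l0. f x z = g z"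
    "g' analytic_on {l0}" "\<forall>\<^sub>F z in at l0. (\<Sum>i\<in>F. f i z) = g' z"
    unfolding removable_at_def by blast
  thus ?case using insert.hyps unfolding removable_at_def
    by (intro exI[of _ "\<lambda>z. g z + g' z"]) (auto intro!: analytic_intros elim: eventually_elim2)
qed

section \<open>Matrix algebra\<close>

lemma index_mult_mat_sum:
  assumes "A \<in> carrier_mat a k" "B \<in> carrier_mat k b" "i < a" "j < b"
  shows "(A * B) $$ (i, j) = (\<Sum>l<k. A $$ (i, l) * B $$ (l, j))"
  using assms by (auto simp: scalar_prod_def lessThan_atLeast0 intro!: sum.cong)

lemma index_mult_mat_vec_sum:
  assumes "A \<in> carrier_mat a k" "v \<in> carrier_vec k" "i < a"
  shows "(A *\<^sub>v v) $ i = (\<Sum>l<k. A $$ (i, l) * v $ l)"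
  using assms by (auto simp: scalar_prod_def lessThan_atLeast0 intro!: sum.cong)

lemma index_mult_mat_col: "j < dim_row A \<Longrightarrow> q < dim_col B \<Longrightarrow> (A * B) $$ (j, q) = (A *\<^sub>v col B q) $ j"
  by simp

lemma diag_fun_eq_mat_diag: "diag_fun n d = mat_diag n d"
  unfolding diag_fun_def mat_diag_def by (intro eq_matI) auto

lemma mat_diag_transpose [simp]: "transpose_mat (mat_diag n d) = mat_diag n d"
  unfolding mat_diag_def by (intro eq_matI) auto

lemma det_mat_diag: "det (mat_diag n d) = (\<Prod>i<n. d i)"
proof -
  have "det (mat_diag n d) = prod_list (diag_mat (mat_diag n d))"
    by (rule det_upper_triangular) (auto simp: upper_triangular_def mat_diag_def)
  also have "diag_mat (mat_diag n d) = map d [0..<n]"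
    unfolding diag_mat_def mat_diag_def by auto
  finally show ?thesis by (simp add: prod.distinct_set_conv_list[symmetric] lessThan_atLeast0)
qed

lemma index_mat_diag_mult_vec:
  assumes "v \<in> carrier_vec n" "j < n"
  shows "(mat_diag n d *\<^sub>v v) $ j = d j * v $ j"
proof -
  have "(mat_diag n d *\<^sub>v v) $ j = (\<Sum>l<n. mat_diag n d $$ (j, l) * v $ l)"
    using assms by (intro index_mult_mat_vec_sum) auto
  also have "\<dots> = (\<Sum>l<n. if l = j then d j * v $ j else 0)"
    using assms(2) by (intro sum.cong) (auto simp: mat_diag_def)
  finally show ?thesis using assms(2) by simp
qed

lemma mat_diag_mult_inverse:
  fixes d :: "nat \<Rightarrow> 'a::field"
  assumes "\<forall>i<r. d i \<noteq> 0"
  shows "mat_diag r d * mat_diag r (\<lambda>i. inverse (d i)) = 1\<^sub>m r"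
  unfolding mat_diag_diag using assms by (intro eq_matI) (auto simp: mat_diag_def)

lemma mult_cancel_inverse_sides:
  fixes T :: "'a::semiring_1 mat"
  assumes "UL \<in> carrier_mat n n" "T \<in> carrier_mat n n" "UR \<in> carrier_mat n n"
    "WL \<in> carrier_mat n n" "WR \<in> carrier_mat n n"
    and "WL * UL = 1\<^sub>m n" "UR * WR = 1\<^sub>m n"
  shows "WL * (UL * T * UR) * WR = T"
proof -
  have "WL * (UL * T * UR) * WR = (WL * UL) * T * (UR * WR)"
    using assms(1-5) by (simp add: assoc_mult_mat[of _ n n _ n _ n])
  thus ?thesis using assms by simp
qed

lemma mult_mat_regroup:
  fixes A B C E F :: "'a::semiring_0 mat"
  assumes A: "A \<in> carrier_mat a n" and B: "B \<in> carrier_mat n n" and C: "C \<in> carrier_mat n n"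
    and E: "E \<in> carrier_mat n n" and F: "F \<in> carrier_mat n b"
  shows "A * (B * C * E) * F = A * B * (C * (E * F))"
proof -
  have "A * (B * C * E) = A * B * C * E"
    using assoc_mult_mat[OF A mult_carrier_mat[OF B C] E] assoc_mult_mat[OF A B C] by simp
  also have "\<dots> * F = A * B * C * (E * F)"
    using assoc_mult_mat[OF mult_carrier_mat[OF mult_carrier_mat[OF A B] C] E F] .
  also have "\<dots> = A * B * (C * (E * F))"
    using assoc_mult_mat[OF mult_carrier_mat[OF A B] C mult_carrier_mat[OF E F]] .
  finally show ?thesis .
qed

lemma mult_eq_mult_upper_blocks:
  fixes A B :: "'a::comm_semiring_0 mat"
  assumes A: "A \<in> carrier_mat r n" and B: "B \<in> carrier_mat n k" and "s \<le> n"
    and zero: "\<And>i j. i < r \<Longrightarrow> s \<le> j \<Longrightarrow> j < n \<Longrightarrow> A $$ (i, j) = 0"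
  shows "A * B = mat r s (\<lambda>(i, j). A $$ (i, j)) * mat s k (\<lambda>(i, j). B $$ (i, j))"
proof (rule eq_matI)
  fix i j assume "i < dim_row (mat r s (\<lambda>(i, j). A $$ (i, j)) * mat s k (\<lambda>(i, j). B $$ (i, j)))"
    "j < dim_col (mat r s (\<lambda>(i, j). A $$ (i, j)) * mat s k (\<lambda>(i, j). B $$ (i, j)))"
  hence ij: "i < r" "j < k" by auto
  have "(A * B) $$ (i, j) = (\<Sum>l<n. A $$ (i, l) * B $$ (l, j))"
    by (rule index_mult_mat_sum[OF A B ij])
  also have "\<dots> = (\<Sum>l<s. A $$ (i, l) * B $$ (l, j))"
    using zero ij assms(3) by (intro sum.mono_neutral_right) auto
  also have "\<dots> = (\<Sum>l<s. mat r s (\<lambda>(i, j). A $$ (i, j)) $$ (i, l) * mat s k (\<lambda>(i, j). B $$ (i, j)) $$ (l, j))"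
    using ij by (intro sum.cong) auto
  also have "\<dots> = (mat r s (\<lambda>(i, j). A $$ (i, j)) * mat s k (\<lambda>(i, j). B $$ (i, j))) $$ (i, j)"
    by (rule index_mult_mat_sum[symmetric]) (use ij in auto)
  finally show "(A * B) $$ (i, j) = \<dots>" .
qed (use A B in auto)

lemma mat_diag_upper_block_commute:
  assumes A: "A \<in> carrier_mat n k" and G: "G \<in> carrier_mat n k" and "k \<le> n"
    and AG: "mat_diag n d * A = G * mat_diag k d"
  shows "mat_diag k d * mat k k (\<lambda>(j, q). A $$ (j, q)) = mat k k (\<lambda>(j, q). G $$ (j, q)) * mat_diag k d"
proof -
  have "d j * A $$ (j, q) = G $$ (j, q) * d q" if "j < k" "q < k" for j q
    using arg_cong[OF AG, of "\<lambda>M. M $$ (j, q)"] that assms(3)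
    by (simp add: mat_diag_mult_left[OF A] mat_diag_mult_right[OF G])
  thus ?thesis by (auto simp: mat_diag_mult_left[OF mat_carrier] mat_diag_mult_right[OF mat_carrier])
qed

lemma mat_inv_carrier: "A \<in> carrier_mat n n \<Longrightarrow> mat_inv A \<in> carrier_mat n n"
  unfolding mat_inv_def by (simp add: adj_mat)

lemma mat_inv_right:
  assumes A: "A \<in> carrier_mat n n" and "det A \<noteq> 0"
  shows "A * mat_inv A = 1\<^sub>m n"
proof -
  have "A * mat_inv A = inverse (det A) \<cdot>\<^sub>m (A * adj_mat A)"
    unfolding mat_inv_def by (rule mult_smult_distrib[OF A adj_mat(1)[OF A]])
  also have "\<dots> = 1\<^sub>m n" unfolding adj_mat(2)[OF A] using assms(2) by (intro eq_matI) auto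
  finally show ?thesis .
qed

lemma mat_inv_left:
  assumes A: "A \<in> carrier_mat n n" and "det A \<noteq> 0"
  shows "mat_inv A * A = 1\<^sub>m n"
proof -
  have "mat_inv A * A = inverse (det A) \<cdot>\<^sub>m (adj_mat A * A)"
    unfolding mat_inv_def by (rule mult_smult_assoc_mat[OF adj_mat(1)[OF A] A])
  also have "\<dots> = 1\<^sub>m n" unfolding adj_mat(3)[OF A] using assms(2) by (intro eq_matI) auto
  finally show ?thesis .
qed

lemma mat_inv_unique:
  assumes A: "A \<in> carrier_mat n n" and B: "B \<in> carrier_mat n n" and "A * B = 1\<^sub>m n" "det A \<noteq> 0"
  shows "mat_inv A = B"
proof -
  have "mat_inv A = mat_inv A * A * B"
    using assms(3) assoc_mult_mat[OF mat_inv_carrier[OF A] A B] mat_inv_carrier[OF A] by simp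
  thus ?thesis using mat_inv_left[OF A assms(4)] B by simp
qed

lemma mat_diag_inverse_conj:
  fixes X :: "'a::field mat"
  assumes X: "X \<in> carrier_mat r r" and d: "\<forall>i<r. d i \<noteq> 0"
  shows "mat_diag r (\<lambda>i. inverse (d i)) * (X * mat_diag r d) * mat_diag r (\<lambda>i. inverse (d i)) =
    mat_diag r (\<lambda>i. inverse (d i)) * X"
proof -
  have "mat_diag r (\<lambda>i. inverse (d i)) * (X * mat_diag r d) * mat_diag r (\<lambda>i. inverse (d i)) =
      mat_diag r (\<lambda>i. inverse (d i)) * (X * (mat_diag r d * mat_diag r (\<lambda>i. inverse (d i))))"
    using X by (simp add: assoc_mult_mat[of _ r r _ r _ r])
  thus ?thesis using mat_diag_mult_inverse[OF d] X by simp
qed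

lemma mat_inv_mult_mat_diag:
  assumes X: "X \<in> carrier_mat r r" "det X \<noteq> 0" and d: "\<forall>i<r. d i \<noteq> 0"
  shows "mat_inv (X * mat_diag r d) = mat_diag r (\<lambda>i. inverse (d i)) * mat_inv X"
proof (rule mat_inv_unique)
  have Xi: "mat_inv X \<in> carrier_mat r r" by (rule mat_inv_carrier[OF X(1)])
  show "X * mat_diag r d \<in> carrier_mat r r" "mat_diag r (\<lambda>i. inverse (d i)) * mat_inv X \<in> carrier_mat r r"
    using mult_carrier_mat[OF X(1) mat_diag_dim] mult_carrier_mat[OF mat_diag_dim Xi] by auto
  show "det (X * mat_diag r d) \<noteq> 0" using X d by (simp add: det_mult[OF X(1) mat_diag_dim] det_mat_diag)
  have "X * mat_diag r d * (mat_diag r (\<lambda>i. inverse (d i)) * mat_inv X) =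
      X * (mat_diag r d * (mat_diag r (\<lambda>i. inverse (d i)) * mat_inv X))"
    by (rule assoc_mult_mat[OF X(1) mat_diag_dim mult_carrier_mat[OF mat_diag_dim Xi]])
  also have "mat_diag r d * (mat_diag r (\<lambda>i. inverse (d i)) * mat_inv X) =
      mat_diag r d * mat_diag r (\<lambda>i. inverse (d i)) * mat_inv X"
    by (rule assoc_mult_mat[OF mat_diag_dim mat_diag_dim Xi, symmetric])
  also have "X * (\<dots>) = 1\<^sub>m r"
    unfolding mat_diag_mult_inverse[OF d] using mat_inv_right[OF X] Xi by simp
  finally show "X * mat_diag r d * (mat_diag r (\<lambda>i. inverse (d i)) * mat_inv X) = 1\<^sub>m r" .
qed

lemma card_less_iff_of_downward_closed:
  assumes "\<And>i j. i \<le> j \<Longrightarrow> j < n \<Longrightarrow> P j \<Longrightarrow> P i" "j < n"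
  shows "j < card {i. i < n \<and> P i} \<longleftrightarrow> P j"
proof
  assume "P j"
  hence "{0..j} \<subseteq> {i. i < n \<and> P i}" using assms by auto
  from card_mono[OF _ this] show "j < card {i. i < n \<and> P i}" by auto
next
  assume j: "j < card {i. i < n \<and> P i}"
  show "P j"
  proof (rule ccontr)
    assume "\<not> P j"
    hence "{i. i < n \<and> P i} \<subseteq> {..<j}" using assms(1) by (auto simp: not_less[symmetric])
    from card_mono[OF _ this] j show False by auto
  qed
qed

lemma kernel_dim_zero_mat: "kernel.dim s (0\<^sub>m s s :: 'a::field mat) = s"
proof -
  have "pivot_fun (0\<^sub>m s s :: 'a mat) (\<lambda>_. s) s" by (rule pivot_funI) auto
  hence "row_echelon_form (0\<^sub>m s s :: 'a mat)" unfolding row_echelon_form_def by auto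
  from find_base_vectors(6)[OF this, of s s]
  have "kernel.dim s (0\<^sub>m s s :: 'a mat) = s - card {i. i < s \<and> Matrix.row (0\<^sub>m s s :: 'a mat) i \<noteq> 0\<^sub>v s}"
    by auto
  also have "{i. i < s \<and> Matrix.row (0\<^sub>m s s :: 'a mat) i \<noteq> 0\<^sub>v s} = {}" by auto
  finally show ?thesis by simp
qed

lemma kernel_dim_mat_diag_zero_power:
  fixes m :: "nat \<Rightarrow> nat"
  assumes antitone: "\<And>i j. i \<le> j \<Longrightarrow> j < n \<Longrightarrow> m j \<le> m i"
  shows "kernel_dim (mat_diag n (\<lambda>i. (0::'a::field) ^ m i)) = card {j. j < n \<and> 0 < m j}"
proof -
  define s where "s = card {j. j < n \<and> 0 < m j}"
  have sn: "s \<le> n" unfolding s_def by (rule order.trans[OF card_mono[of "{..<n}"]]) auto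
  have sj: "j < s \<longleftrightarrow> 0 < m j" if "j < n" for j
    unfolding s_def using antitone that by (intro card_less_iff_of_downward_closed) force+
  have "mat_diag n (\<lambda>i. (0::'a) ^ m i) = four_block_mat (0\<^sub>m s s) (0\<^sub>m s (n - s)) (0\<^sub>m (n - s) s) (1\<^sub>m (n - s))"
  proof (rule eq_matI)
    fix i j assume "i < dim_row (four_block_mat (0\<^sub>m s s) (0\<^sub>m s (n - s)) (0\<^sub>m (n - s) s) (1\<^sub>m (n - s)) :: 'a mat)"
      "j < dim_col (four_block_mat (0\<^sub>m s s) (0\<^sub>m s (n - s)) (0\<^sub>m (n - s) s) (1\<^sub>m (n - s)) :: 'a mat)"
    hence ij: "i < n" "j < n" using sn by auto
    show "mat_diag n (\<lambda>i. (0::'a) ^ m i) $$ (i, j) =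
        four_block_mat (0\<^sub>m s s) (0\<^sub>m s (n - s)) (0\<^sub>m (n - s) s) (1\<^sub>m (n - s)) $$ (i, j)"
      using ij sj[OF ij(1)] sj[OF ij(2)] sn by (auto simp: mat_diag_def index_mat_four_block)
  qed (use sn in \<open>auto simp: mat_diag_def\<close>)
  hence "kernel_dim (mat_diag n (\<lambda>i. (0::'a) ^ m i)) = kernel.dim (s + (n - s)) \<dots>"
    using sn by (simp add: kernel_dim_def)
  also have "\<dots> = kernel.dim s (0\<^sub>m s s :: 'a mat) + kernel.dim (n - s) (1\<^sub>m (n - s) :: 'a mat)"
    by (rule kernel_four_block_0_mat) auto
  also have "\<dots> = s" by (simp add: kernel_dim_zero_mat kernel_one_mat(1))
  finally show ?thesis unfolding s_def .
qed

lemma kernel_dim_mult_invertible: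
  fixes A :: "'a::field mat"
  assumes A: "A \<in> carrier_mat n n" and P: "P \<in> carrier_mat n n" "Q \<in> carrier_mat n n" "Q * P = 1\<^sub>m n"
    and B: "B \<in> carrier_mat n n" "C \<in> carrier_mat n n" "B * C = 1\<^sub>m n"
  shows "kernel_dim (P * A * B) = kernel_dim A"
proof -
  have "kernel_dim (P * A * B) = kernel.dim n (P * A * B)" using A P B by (simp add: kernel_dim_def)
  also have "\<dots> = kernel.dim n (P * A)" using A P B by (intro mat_kernel_dim_mult_eq_right) auto
  also have "\<dots> = kernel.dim n A" using mat_kernel_mult_eq[OF A P] by simp
  finally show ?thesis using A by (simp add: kernel_dim_def)
qed

lemma kernel_nonzero_if_columns_vanish_below:
  fixes B :: "'a::field mat"
  assumes B: "B \<in> carrier_mat n r" and q: "q < r"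
    and zero: "\<And>j k. q \<le> j \<Longrightarrow> j < n \<Longrightarrow> k \<le> q \<Longrightarrow> B $$ (j, k) = 0"
  obtains c where "c \<in> carrier_vec r" "c \<noteq> 0\<^sub>v r" "B *\<^sub>v c = 0\<^sub>v n"
proof -
  define Bq where "Bq = mat (Suc q) (Suc q) (\<lambda>(j, k). if j < q then B $$ (j, k) else 0)"
  have Bq: "Bq \<in> carrier_mat (Suc q) (Suc q)" unfolding Bq_def by simp
  have "det Bq = det (transpose_mat Bq)" using det_transpose[OF Bq] by simp
  also have "\<dots> = (\<Sum>i<Suc q. transpose_mat Bq $$ (i, q) * cofactor (transpose_mat Bq) i q)"
    by (rule laplace_expansion_column) (use Bq in auto)
  also have "\<dots> = 0" by (intro sum.neutral) (auto simp: Bq_def)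
  finally obtain v where v: "v \<in> carrier_vec (Suc q)" "v \<noteq> 0\<^sub>v (Suc q)" "Bq *\<^sub>v v = 0\<^sub>v (Suc q)"
    using det_0_iff_vec_prod_zero[OF Bq] by blast
  define c where "c = vec r (\<lambda>i. if i \<le> q then v $ i else 0)"
  have "c \<noteq> 0\<^sub>v r"
  proof
    assume "c = 0\<^sub>v r"
    hence "v $ i = 0" if "i \<le> q" for i
    proof -
      have "c $ i = 0" using \<open>c = 0\<^sub>v r\<close> that q by simp
      thus ?thesis using that q by (simp add: c_def)
    qed
    with v(1,2) show False by (auto simp: less_Suc_eq_le)
  qed
  moreover have "B *\<^sub>v c = 0\<^sub>v n"
  proof (rule eq_vecI)
    fix j assume "j < dim_vec (0\<^sub>v n)"
    hence j: "j < n" by simp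
    have "(B *\<^sub>v c) $ j = (\<Sum>k<r. B $$ (j, k) * c $ k)"
      using B j by (auto simp: scalar_prod_def lessThan_atLeast0 c_def)
    also have "\<dots> = (\<Sum>k<Suc q. B $$ (j, k) * v $ k)"
      by (rule sum.mono_neutral_cong_right) (use q in \<open>auto simp: c_def\<close>)
    also have "\<dots> = 0"
    proof (cases "j < q")
      case True
      have "(\<Sum>k<Suc q. B $$ (j, k) * v $ k) = (Bq *\<^sub>v v) $ j"
        using True v(1) by (auto simp: Bq_def scalar_prod_def lessThan_atLeast0)
      thus ?thesis using v(3) True by simp
    qed (use zero j in \<open>auto intro!: sum.neutral\<close>)
    finally show "(B *\<^sub>v c) $ j = 0\<^sub>v n $ j" using j by simp
  qed (use B in simp)
  ultimately show ?thesis using that[of c] unfolding c_def by simp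
qed

lemma injective_zero_pattern_le:
  fixes B :: "'a::field mat" and m a :: "nat \<Rightarrow> nat"
  assumes B: "B \<in> carrier_mat n r"
    and inj: "\<And>c. c \<in> carrier_vec r \<Longrightarrow> B *\<^sub>v c = 0\<^sub>v n \<Longrightarrow> c = 0\<^sub>v r"
    and m_antitone: "\<And>i j. i \<le> j \<Longrightarrow> j < n \<Longrightarrow> m j \<le> m i"
    and a_antitone: "\<And>i j. i \<le> j \<Longrightarrow> j < r \<Longrightarrow> a j \<le> a i"
    and zero: "\<And>j q. j < n \<Longrightarrow> q < r \<Longrightarrow> m j < a q \<Longrightarrow> B $$ (j, q) = 0"
    and q: "q < r"
  shows "a q \<le> m q"
proof (rule ccontr)
  assume "\<not> a q \<le> m q"
  hence "B $$ (j, k) = 0" if "q \<le> j" "j < n" "k \<le> q" for j k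
    using zero[of j k] m_antitone[of q j] a_antitone[of k q] that q by simp
  with B q obtain c where "c \<in> carrier_vec r" "c \<noteq> 0\<^sub>v r" "B *\<^sub>v c = 0\<^sub>v n"
    by (rule kernel_nonzero_if_columns_vanish_below)
  with inj show False by blast
qed

lemma det_upper_block_nonzero:
  fixes B :: "'a::field mat"
  assumes B: "B \<in> carrier_mat n k" and "k \<le> n"
    and inj: "\<And>c. c \<in> carrier_vec k \<Longrightarrow> B *\<^sub>v c = 0\<^sub>v n \<Longrightarrow> c = 0\<^sub>v k"
    and lower: "\<And>j q. k \<le> j \<Longrightarrow> j < n \<Longrightarrow> q < k \<Longrightarrow> B $$ (j, q) = 0"
  shows "det (mat k k (\<lambda>(j, q). B $$ (j, q))) \<noteq> 0"
proof
  define A where "A = mat k k (\<lambda>(j, q). B $$ (j, q))"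
  assume "det (mat k k (\<lambda>(j, q). B $$ (j, q))) = 0"
  then obtain c where c: "c \<in> carrier_vec k" "c \<noteq> 0\<^sub>v k" "A *\<^sub>v c = 0\<^sub>v k"
    using det_0_iff_vec_prod_zero[of A k] unfolding A_def by auto
  have "B *\<^sub>v c = 0\<^sub>v n"
  proof (rule eq_vecI)
    fix j assume "j < dim_vec (0\<^sub>v n)"
    hence j: "j < n" by simp
    show "(B *\<^sub>v c) $ j = 0\<^sub>v n $ j"
    proof (cases "j < k")
      case True
      have "(B *\<^sub>v c) $ j = (\<Sum>l<k. B $$ (j, l) * c $ l)"
        by (rule index_mult_mat_vec_sum[OF B c(1) j])
      also have "\<dots> = (\<Sum>l<k. A $$ (j, l) * c $ l)"
        using True by (intro sum.cong) (auto simp: A_def)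
      also have "\<dots> = (A *\<^sub>v c) $ j"
        using c(1) True by (intro index_mult_mat_vec_sum[symmetric]) (auto simp: A_def)
      finally show ?thesis using c(3) True j by simp
    next
      case False
      have "(B *\<^sub>v c) $ j = (\<Sum>l<k. B $$ (j, l) * c $ l)"
        by (rule index_mult_mat_vec_sum[OF B c(1) j])
      also have "\<dots> = 0" using False j lower by (intro sum.neutral) auto
      finally show ?thesis using j by simp
    qed
  qed (use B in simp)
  with inj c show False by blast
qed

lemma sum_enat: "(\<Sum>i\<in>A. enat (f i)) = enat (\<Sum>i\<in>A. f i)"
  by (induction A rule: infinite_finite_induct) (auto simp: zero_enat_def)

lemma enat_sum_finite_summand:
  assumes "(\<Sum>i\<in>A. f i) = enat s" "finite A" "i \<in> A"
  shows "f i \<noteq> \<infinity>"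
proof
  assume "f i = \<infinity>"
  hence "(\<Sum>i\<in>A. f i) = \<infinity>" using sum.remove[OF assms(2,3), of f] by simp
  with assms(1) show False by simp
qed

section \<open>Matrix functions analytic at a point\<close>

definition mat_analytic_at :: "complex \<Rightarrow> nat \<Rightarrow> nat \<Rightarrow> (complex \<Rightarrow> complex mat) \<Rightarrow> bool" where
  "mat_analytic_at l0 a b M \<longleftrightarrow>
     (\<forall>z. M z \<in> carrier_mat a b) \<and> (\<forall>i<a. \<forall>j<b. (\<lambda>z. M z $$ (i, j)) analytic_on {l0})"

lemma mat_analytic_atD:
  assumes "mat_analytic_at l0 a b M"
  shows "M z \<in> carrier_mat a b" "i < a \<Longrightarrow> j < b \<Longrightarrow> (\<lambda>z. M z $$ (i, j)) analytic_on {l0}"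
  using assms unfolding mat_analytic_at_def by auto

lemma mat_holo_subset: "mat_holo S a b M \<Longrightarrow> S' \<subseteq> S \<Longrightarrow> mat_holo S' a b M"
  unfolding mat_holo_def using holomorphic_on_subset by blast

lemma vec_holo_subset: "vec_holo S n y \<Longrightarrow> S' \<subseteq> S \<Longrightarrow> vec_holo S' n y"
  unfolding vec_holo_def using holomorphic_on_subset by blast

lemma mat_holo_transpose:
  assumes "mat_holo S a b M"
  shows "mat_holo S b a (\<lambda>z. transpose_mat (M z))"
proof -
  have M: "M z \<in> carrier_mat a b" for z using assms unfolding mat_holo_def by auto
  have "(\<lambda>z. transpose_mat (M z) $$ (i, j)) = (\<lambda>z. M z $$ (j, i))" if "i < b" "j < a" for i j
  proof
    fix z show "transpose_mat (M z) $$ (i, j) = M z $$ (j, i)" using M[of z] that by auto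
  qed
  thus ?thesis using assms unfolding mat_holo_def by auto
qed

lemma mat_holo_imp_mat_analytic_at:
  "mat_holo S a b M \<Longrightarrow> open S \<Longrightarrow> l0 \<in> S \<Longrightarrow> mat_analytic_at l0 a b M"
  unfolding mat_holo_def mat_analytic_at_def by (auto intro: holomorphic_on_imp_analytic_at)

lemma vec_holo_analytic_at:
  "vec_holo S n y \<Longrightarrow> open S \<Longrightarrow> l0 \<in> S \<Longrightarrow> i < n \<Longrightarrow> (\<lambda>z. y z $ i) analytic_on {l0}"
  unfolding vec_holo_def by (auto intro: holomorphic_on_imp_analytic_at)

lemma mat_analytic_at_mult:
  assumes "mat_analytic_at l0 a k A" "mat_analytic_at l0 k b B"
  shows "mat_analytic_at l0 a b (\<lambda>z. A z * B z)"
  unfolding mat_analytic_at_def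
proof (intro conjI allI impI)
  fix z show "A z * B z \<in> carrier_mat a b"
    using mat_analytic_atD(1)[OF assms(1)] mat_analytic_atD(1)[OF assms(2)] by (rule mult_carrier_mat)
next
  fix i j assume ij: "i < a" "j < b"
  have "(\<lambda>z. (A z * B z) $$ (i, j)) = (\<lambda>z. \<Sum>l<k. A z $$ (i, l) * B z $$ (l, j))"
    using index_mult_mat_sum mat_analytic_atD(1)[OF assms(1)] mat_analytic_atD(1)[OF assms(2)] ij
    by blast
  thus "(\<lambda>z. (A z * B z) $$ (i, j)) analytic_on {l0}"
    using ij mat_analytic_atD(2)[OF assms(1)] mat_analytic_atD(2)[OF assms(2)]
    by (auto intro!: analytic_intros)
qed

lemma mat_analytic_at_upper_block:
  assumes "mat_analytic_at l0 a b M" "s \<le> a"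
  shows "mat_analytic_at l0 s b (\<lambda>z. mat s b (\<lambda>(i, j). M z $$ (i, j)))"
  using assms unfolding mat_analytic_at_def by auto

lemma analytic_on_mult_mat_vec_index:
  assumes A: "mat_analytic_at l0 a k A"
    and y: "\<And>z. y z \<in> carrier_vec k" "\<And>i. i < k \<Longrightarrow> (\<lambda>z. y z $ i) analytic_on {l0}"
    and j: "j < a"
  shows "(\<lambda>z. (A z *\<^sub>v y z) $ j) analytic_on {l0}"
proof -
  have "(\<lambda>z. (A z *\<^sub>v y z) $ j) = (\<lambda>z. \<Sum>l<k. A z $$ (j, l) * y z $ l)"
    using index_mult_mat_vec_sum[OF mat_analytic_atD(1)[OF A] y(1) j] by blast
  thus ?thesis using mat_analytic_atD(2)[OF A j] y(2) by (auto intro!: analytic_intros)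
qed

lemma analytic_on_det:
  assumes "mat_analytic_at l0 k k M"
  shows "(\<lambda>z. det (M z)) analytic_on {l0}"
proof -
  have "(\<lambda>z. det (M z)) =
      (\<lambda>z. \<Sum>p\<in>{p. p permutes {0..<k}}. signof p * (\<Prod>i=0..<k. M z $$ (i, p i)))"
    using det_def'[OF mat_analytic_atD(1)[OF assms]] by auto
  thus ?thesis
    using mat_analytic_atD(2)[OF assms] by (auto intro!: analytic_intros simp: permutes_in_image)
qed

lemma det_eventually_nonzero:
  assumes "mat_analytic_at l0 k k M" "det (M l0) \<noteq> 0"
  shows "\<forall>\<^sub>F z in at l0. det (M z) \<noteq> 0"
  using analytic_at_imp_isCont[OF analytic_on_det[OF assms(1)]] assms(2)
  unfolding isCont_def by (rule tendsto_imp_eventually_ne)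

lemma mat_analytic_at_mat_inv:
  assumes M: "mat_analytic_at l0 k k M" and "det (M l0) \<noteq> 0"
  shows "mat_analytic_at l0 k k (\<lambda>z. mat_inv (M z))"
  unfolding mat_analytic_at_def
proof (intro conjI allI impI)
  fix z show "mat_inv (M z) \<in> carrier_mat k k" by (rule mat_inv_carrier[OF mat_analytic_atD(1)[OF M]])
next
  fix i j assume ij: "i < k" "j < k"
  have Mc: "M z \<in> carrier_mat k k" for z by (rule mat_analytic_atD(1)[OF M])
  hence dim_M [simp]: "dim_row (M z) = k" "dim_col (M z) = k" for z by auto
  have "mat_inv (M z) $$ (i, j) = inverse (det (M z)) * ((-1) ^ (j + i) * det (mat_delete (M z) j i))"
    for z unfolding mat_inv_def adj_mat_def cofactor_def using Mc[of z] ij by simp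
  moreover have "mat_analytic_at l0 (k - 1) (k - 1) (\<lambda>z. mat_delete (M z) j i)"
    unfolding mat_analytic_at_def
  proof (intro conjI allI impI)
    fix z show "mat_delete (M z) j i \<in> carrier_mat (k - 1) (k - 1)" using mat_delete_carrier[OF Mc] .
  next
    fix i' j' assume "i' < k - 1" "j' < k - 1"
    hence "(\<lambda>z. mat_delete (M z) j i $$ (i', j')) =
        (\<lambda>z. M z $$ (if i' < j then i' else Suc i', if j' < i then j' else Suc j'))"
      by (auto simp: mat_delete_def)
    thus "(\<lambda>z. mat_delete (M z) j i $$ (i', j')) analytic_on {l0}"
      using mat_analytic_atD(2)[OF M] \<open>i' < k - 1\<close> \<open>j' < k - 1\<close> by auto
  qed
  ultimately show "(\<lambda>z. mat_inv (M z) $$ (i, j)) analytic_on {l0}"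
    using analytic_on_det[OF M] assms(2) by (auto intro!: analytic_intros analytic_on_det)
qed

lemma det_eq_if_diag_similar:
  assumes A: "mat_analytic_at l0 k k A" and G: "mat_analytic_at l0 k k G"
    and sim: "\<forall>\<^sub>F z in at l0. mat_diag k (d z) * A z = G z * mat_diag k (d z) \<and> (\<forall>i<k. d z i \<noteq> 0)"
  shows "det (A l0) = det (G l0)"
proof (rule analytic_at_eq_if_eventually_eq[OF analytic_on_det[OF A] analytic_on_det[OF G]])
  show "\<forall>\<^sub>F z in at l0. det (A z) = det (G z)"
    using sim
  proof eventually_elim
    case (elim z)
    have "(\<Prod>i<k. d z i) * det (A z) = det (G z) * (\<Prod>i<k. d z i)"
      using arg_cong[OF conjunct1[OF elim], of det] mat_analytic_atD(1)[OF A] mat_analytic_atD(1)[OF G]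
      by (simp add: det_mult[of _ k] det_mat_diag)
    thus ?case using elim by (simp add: mult.commute)
  qed
qed

lemma vanishing_columns_factor:
  assumes M: "\<And>z. M z \<in> carrier_mat a b"
    and van: "\<And>i q. i < a \<Longrightarrow> q < b \<Longrightarrow> vanishes_to_order l0 (k q) (\<lambda>z. M z $$ (i, q))"
  obtains G where "mat_analytic_at l0 a b G"
    "\<forall>\<^sub>F z in nhds l0. M z = G z * mat_diag b (\<lambda>q. (z - l0) ^ k q)"
proof -
  have ex: "\<forall>iq\<in>{..<a} \<times> {..<b}. \<exists>g. g analytic_on {l0} \<and>
      (\<forall>\<^sub>F z in nhds l0. M z $$ iq = (z - l0) ^ k (snd iq) * g z)"
    using van unfolding vanishes_to_order_def by auto
  obtain g where g: "\<forall>iq\<in>{..<a} \<times> {..<b}. g iq analytic_on {l0} \<and>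
      (\<forall>\<^sub>F z in nhds l0. M z $$ iq = (z - l0) ^ k (snd iq) * g iq z)"
    using bchoice[OF ex] by blast
  define G where "G z = mat a b (\<lambda>iq. g iq z)" for z
  have "mat_analytic_at l0 a b G" unfolding mat_analytic_at_def G_def using g by auto
  moreover have "\<forall>\<^sub>F z in nhds l0. \<forall>iq\<in>{..<a} \<times> {..<b}. M z $$ iq = (z - l0) ^ k (snd iq) * g iq z"
    using g by (intro eventually_ball_finite) auto
  hence "\<forall>\<^sub>F z in nhds l0. M z = G z * mat_diag b (\<lambda>q. (z - l0) ^ k q)"
  proof eventually_elim
    case (elim z)
    have "G z * mat_diag b (\<lambda>q. (z - l0) ^ k q) = mat a b (\<lambda>(i, q). g (i, q) z * (z - l0) ^ k q)"
      unfolding G_def by (subst mat_diag_mult_right) auto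
    also have "\<dots> = M z"
    proof (rule eq_matI)
      fix i q assume "i < dim_row (M z)" "q < dim_col (M z)"
      hence "(i, q) \<in> {..<a} \<times> {..<b}" using M[of z] by auto
      thus "mat a b (\<lambda>(i, q). g (i, q) z * (z - l0) ^ k q) $$ (i, q) = M z $$ (i, q)"
        using elim by (auto simp: mult.commute)
    qed (use M[of z] in auto)
    finally show ?case ..
  qed
  ultimately show ?thesis using that by blast
qed

section \<open>Congruence of meromorphic matrices\<close>

lemma mero_congr_iff_removable:
  "mero_congr l0 r c M1 M2 \<longleftrightarrow> (\<forall>i<r. \<forall>j<c. removable_at l0 (\<lambda>z. M2 z $$ (i, j) - M1 z $$ (i, j)))"
proof
  assume "mero_congr l0 r c M1 M2"
  then obtain e where e: "e > 0" and h: "\<forall>i<r. \<forall>j<c. \<exists>h. h holomorphic_on ball l0 e \<and>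
       (\<forall>z\<in>ball l0 e - {l0}. M2 z $$ (i, j) - M1 z $$ (i, j) = h z)"
    unfolding mero_congr_def by blast
  show "\<forall>i<r. \<forall>j<c. removable_at l0 (\<lambda>z. M2 z $$ (i, j) - M1 z $$ (i, j))"
  proof (intro allI impI)
    fix i j assume "i < r" "j < c"
    with h obtain h where h: "h holomorphic_on ball l0 e"
      "\<forall>z\<in>ball l0 e - {l0}. M2 z $$ (i, j) - M1 z $$ (i, j) = h z" by blast
    have "h analytic_on {l0}" using h(1) e by (intro holomorphic_on_imp_analytic_at) auto
    moreover have "\<forall>\<^sub>F z in at l0. M2 z $$ (i, j) - M1 z $$ (i, j) = h z"
      unfolding eventually_at using e h(2) by (intro exI[of _ e]) (auto simp: dist_commute)
    ultimately show "removable_at l0 (\<lambda>z. M2 z $$ (i, j) - M1 z $$ (i, j))"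
      unfolding removable_at_def by blast
  qed
next
  assume A: "\<forall>i<r. \<forall>j<c. removable_at l0 (\<lambda>z. M2 z $$ (i, j) - M1 z $$ (i, j))"
  define P where "P e ij \<longleftrightarrow> (\<exists>h. h holomorphic_on ball l0 e \<and>
       (\<forall>z\<in>ball l0 e - {l0}. M2 z $$ ij - M1 z $$ ij = h z))" for e ij
  have "\<forall>\<^sub>F e in at_right 0. P e (i, j)" if ij: "i < r" "j < c" for i j
  proof -
    obtain g where g: "g analytic_on {l0}" "\<forall>\<^sub>F z in at l0. M2 z $$ (i, j) - M1 z $$ (i, j) = g z"
      using A ij unfolding removable_at_def by blast
    obtain e1 where e1: "e1 > 0" "g holomorphic_on ball l0 e1"
      using g(1) unfolding analytic_at_ball by blast
    obtain e2 where e2: "e2 > 0" "\<forall>z. z \<noteq> l0 \<and> dist z l0 < e2 \<longrightarrow> M2 z $$ (i, j) - M1 z $$ (i, j) = g z"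
      using g(2) unfolding eventually_at by blast
    have "P e (i, j)" if "0 < e" "e < min e1 e2" for e
      unfolding P_def using e1 e2 that
      by (auto intro!: exI[of _ g] holomorphic_on_subset[OF e1(2)] simp: dist_commute)
    thus ?thesis unfolding eventually_at_right_field using e1 e2
      by (intro exI[of _ "min e1 e2"]) auto
  qed
  hence "\<forall>\<^sub>F e in at_right 0. e > 0 \<and> (\<forall>ij\<in>{..<r} \<times> {..<c}. P e ij)"
    by (intro eventually_conj eventually_ball_finite ballI)
       (auto simp: eventually_at_right_field intro: exI[of _ 1])
  then obtain e where "e > 0" "\<forall>ij\<in>{..<r} \<times> {..<c}. P e ij"
    using eventually_happens'[OF trivial_limit_at_right_real] by blast
  thus "mero_congr l0 r c M1 M2" unfolding mero_congr_def P_def by (intro exI[of _ e]) auto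
qed

lemma mero_congr_sym:
  assumes "mero_congr l0 r c M1 M2"
  shows "mero_congr l0 r c M2 M1"
  unfolding mero_congr_iff_removable
proof (intro allI impI)
  fix i j assume "i < r" "j < c"
  with assms have "removable_at l0 (\<lambda>z. M2 z $$ (i, j) - M1 z $$ (i, j))"
    unfolding mero_congr_iff_removable by blast
  from removable_at_uminus[OF this]
  show "removable_at l0 (\<lambda>z. M1 z $$ (i, j) - M2 z $$ (i, j))" by simp
qed

lemma mero_congr_cong:
  assumes "mero_congr l0 r c M1 M2"
    and "\<forall>\<^sub>F z in at l0. M1 z = M1' z" "\<forall>\<^sub>F z in at l0. M2 z = M2' z"
  shows "mero_congr l0 r c M1' M2'"
  unfolding mero_congr_iff_removable
proof (intro allI impI)
  fix i j assume "i < r" "j < c"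
  hence "removable_at l0 (\<lambda>z. M2 z $$ (i, j) - M1 z $$ (i, j))"
    using assms(1) unfolding mero_congr_iff_removable by blast
  moreover have "\<forall>\<^sub>F z in at l0. M2 z $$ (i, j) - M1 z $$ (i, j) = M2' z $$ (i, j) - M1' z $$ (i, j)"
    using assms(2,3) by eventually_elim simp
  ultimately show "removable_at l0 (\<lambda>z. M2' z $$ (i, j) - M1' z $$ (i, j))"
    by (rule removable_at_cong)
qed

lemma mero_congr_eventually_eq_iff:
  assumes "\<forall>\<^sub>F z in at l0. M1 z = M1' z"
  shows "mero_congr l0 r c M1 M2 \<longleftrightarrow> mero_congr l0 r c M1' M2"
proof
  show "mero_congr l0 r c M1' M2" if "mero_congr l0 r c M1 M2"
    using that assms by (rule mero_congr_cong) simp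
  have "\<forall>\<^sub>F z in at l0. M1' z = M1 z" using assms by (simp add: eq_commute)
  thus "mero_congr l0 r c M1 M2" if "mero_congr l0 r c M1' M2"
    by (rule mero_congr_cong[OF that]) simp
qed

lemma mero_congr_mult_right:
  assumes "mero_congr l0 r c M1 M2"
    and "\<And>z. M1 z \<in> carrier_mat r c" "\<And>z. M2 z \<in> carrier_mat r c"
    and C: "mat_analytic_at l0 c k C"
  shows "mero_congr l0 r k (\<lambda>z. M1 z * C z) (\<lambda>z. M2 z * C z)"
  unfolding mero_congr_iff_removable
proof (intro allI impI)
  fix i j assume ij: "i < r" "j < k"
  have "(M2 z * C z) $$ (i, j) - (M1 z * C z) $$ (i, j) =
      (\<Sum>l<c. (M2 z $$ (i, l) - M1 z $$ (i, l)) * C z $$ (l, j))" for z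
    using index_mult_mat_sum[OF assms(2) mat_analytic_atD(1)[OF C] ij]
      index_mult_mat_sum[OF assms(3) mat_analytic_atD(1)[OF C] ij]
    by (simp add: left_diff_distrib sum_subtractf)
  moreover have "removable_at l0 (\<lambda>z. \<Sum>l<c. (M2 z $$ (i, l) - M1 z $$ (i, l)) * C z $$ (l, j))"
    using assms(1) ij mat_analytic_atD(2)[OF C] unfolding mero_congr_iff_removable
    by (intro removable_at_sum removable_at_mult) auto
  ultimately show "removable_at l0 (\<lambda>z. (M2 z * C z) $$ (i, j) - (M1 z * C z) $$ (i, j))"
    by simp
qed

lemma mero_congr_transfer_inverse:
  assumes "mero_congr l0 r r (\<lambda>z. D z * A z) D" and "\<And>z. D z \<in> carrier_mat r r"
    and "mat_analytic_at l0 r r A" "mat_analytic_at l0 r r B"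
    and "\<forall>\<^sub>F z in at l0. A z * B z = 1\<^sub>m r"
  shows "mero_congr l0 r r (\<lambda>z. D z * B z) D"
proof -
  have A: "A z \<in> carrier_mat r r" and B: "B z \<in> carrier_mat r r" for z
    using assms(3,4) by (simp_all add: mat_analytic_atD)
  have "D z * A z \<in> carrier_mat r r" for z using assms(2) A by (rule mult_carrier_mat)
  hence "mero_congr l0 r r (\<lambda>z. D z * A z * B z) (\<lambda>z. D z * B z)"
    by (rule mero_congr_mult_right[OF assms(1) _ assms(2) assms(4)])
  moreover have "\<forall>\<^sub>F z in at l0. D z * A z * B z = D z"
    using assms(5) by eventually_elim (metis assms(2) A B assoc_mult_mat right_mult_one_mat)
  ultimately have "mero_congr l0 r r D (\<lambda>z. D z * B z)"
    by (rule mero_congr_cong) simp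
  thus ?thesis by (rule mero_congr_sym)
qed

lemma mero_congr_inverse_iff:
  assumes X: "mat_analytic_at l0 r r X" "det (X l0) \<noteq> 0" and D: "\<And>z. D z \<in> carrier_mat r r"
  shows "mero_congr l0 r r (\<lambda>z. D z * X z) D \<longleftrightarrow> mero_congr l0 r r (\<lambda>z. D z * mat_inv (X z)) D"
proof -
  have Xc: "X z \<in> carrier_mat r r" for z by (rule mat_analytic_atD(1)[OF X(1)])
  have "\<forall>\<^sub>F z in at l0. X z * mat_inv (X z) = 1\<^sub>m r \<and> mat_inv (X z) * X z = 1\<^sub>m r"
    using det_eventually_nonzero[OF X] by eventually_elim (simp add: mat_inv_right mat_inv_left Xc)
  hence XY: "\<forall>\<^sub>F z in at l0. X z * mat_inv (X z) = 1\<^sub>m r"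
    and YX: "\<forall>\<^sub>F z in at l0. mat_inv (X z) * X z = 1\<^sub>m r"
    by (auto elim: eventually_mono)
  note Y = mat_analytic_at_mat_inv[OF X]
  show ?thesis
  proof
    assume "mero_congr l0 r r (\<lambda>z. D z * X z) D"
    from mero_congr_transfer_inverse[OF this D X(1) Y XY]
    show "mero_congr l0 r r (\<lambda>z. D z * mat_inv (X z)) D" .
  next
    assume "mero_congr l0 r r (\<lambda>z. D z * mat_inv (X z)) D"
    from mero_congr_transfer_inverse[OF this D Y X(1) YX]
    show "mero_congr l0 r r (\<lambda>z. D z * X z) D" .
  qed
qed

lemma mero_diag_factor:
  fixes M X :: "complex \<Rightarrow> complex mat" and d :: "complex \<Rightarrow> nat \<Rightarrow> complex"
  assumes X: "mat_analytic_at l0 r r X" "det (X l0) \<noteq> 0"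
    and M: "\<forall>\<^sub>F z in at l0. M z = X z * mat_diag r (d z) \<and> (\<forall>i<r. d z i \<noteq> 0)"
  defines "Dinv \<equiv> \<lambda>z. mat_diag r (\<lambda>i. inverse (d z i))"
  shows "mero_invertible l0 M \<and>
    (mero_congr l0 r r (\<lambda>z. Dinv z * M z * Dinv z) Dinv \<longleftrightarrow> mero_congr l0 r r (\<lambda>z. mat_inv (M z)) Dinv)"
proof -
  have Xc: "X z \<in> carrier_mat r r" for z by (rule mat_analytic_atD(1)[OF X(1)])
  have ev: "\<forall>\<^sub>F z in at l0. det (X z) \<noteq> 0 \<and> M z = X z * mat_diag r (d z) \<and> (\<forall>i<r. d z i \<noteq> 0)"
    using det_eventually_nonzero[OF X] M by eventually_elim blast
  have "mero_invertible l0 M"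
    unfolding mero_invertible_def using ev
    by eventually_elim (simp add: det_mult[OF Xc mat_diag_dim] det_mat_diag)
  moreover have "\<forall>\<^sub>F z in at l0. Dinv z * M z * Dinv z = Dinv z * X z"
    using ev by eventually_elim (simp add: Dinv_def mat_diag_inverse_conj Xc)
  moreover have "\<forall>\<^sub>F z in at l0. mat_inv (M z) = Dinv z * mat_inv (X z)"
    using ev by eventually_elim (simp add: Dinv_def mat_inv_mult_mat_diag Xc)
  ultimately show ?thesis
    using mero_congr_inverse_iff[OF X, of Dinv] by (simp add: mero_congr_eventually_eq_iff Dinv_def)
qed

section \<open>Canonical matrices and the local Smith form\<close>

lemma left_canonical_transpose:
  assumes "left_canonical \<Omega> l0 n T m V" "kernel_dim (transpose_mat (T l0)) = kernel_dim (T l0)"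
  shows "right_canonical \<Omega> l0 n (\<lambda>z. transpose_mat (T z)) m (\<lambda>z. transpose_mat (V z))"
proof -
  define r where "r = kernel_dim (T l0)"
  have V: "mat_holo \<Omega> r n V" using assms(1) unfolding left_canonical_def Let_def r_def by auto
  have col_row: "(\<lambda>z. col (transpose_mat (V z)) i) = (\<lambda>z. row (V z) i)" if "i < r" for i
  proof
    fix z have "V z \<in> carrier_mat r n" using V unfolding mat_holo_def by blast
    thus "col (transpose_mat (V z)) i = row (V z) i" using that by simp
  qed
  moreover have "(\<Sum>i<r. left_root_mult l0 n T (\<lambda>z. col (transpose_mat (V z)) i)) =
      (\<Sum>i<r. left_root_mult l0 n T (\<lambda>z. row (V z) i))"
    by (intro sum.cong) (simp_all add: col_row)
  moreover have "root_function \<Omega> l0 n (\<lambda>z. transpose_mat (T z)) y = left_root_function \<Omega> l0 n T y"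
    "root_mult l0 n (\<lambda>z. transpose_mat (T z)) y = left_root_mult l0 n T y" for y
    unfolding root_function_def left_root_function_def root_mult_def left_root_mult_def by simp_all
  ultimately show ?thesis
    using assms mat_holo_transpose[OF V]
    unfolding right_canonical_def left_canonical_def Let_def r_def[symmetric]
    by (auto cong: sum.cong)
qed

locale local_smith_form =
  fixes l0 :: complex and e :: real and n :: nat and m :: "nat \<Rightarrow> nat"
    and T UL UR WL WR :: "complex \<Rightarrow> complex mat"
  assumes radius_pos: "0 < e"
    and holo_T: "mat_holo (ball l0 e) n n T"
    and holo_UL: "mat_holo (ball l0 e) n n UL" and holo_UR: "mat_holo (ball l0 e) n n UR"
    and holo_WL: "mat_holo (ball l0 e) n n WL" and holo_WR: "mat_holo (ball l0 e) n n WR"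
    and WL_UL: "\<And>z. z \<in> ball l0 e \<Longrightarrow> WL z * UL z = 1\<^sub>m n"
    and UR_WR: "\<And>z. z \<in> ball l0 e \<Longrightarrow> UR z * WR z = 1\<^sub>m n"
    and smith: "\<And>z. z \<in> ball l0 e \<Longrightarrow> UL z * T z * UR z = mat_diag n (\<lambda>i. (z - l0) ^ m i)"
    and antitone: "\<And>i j. i \<le> j \<Longrightarrow> j < n \<Longrightarrow> m j \<le> m i"

begin

lemma center_in_ball [simp]: "l0 \<in> ball l0 e"
  using radius_pos by simp

lemma carrier_mats [simp]:
  "T z \<in> carrier_mat n n" "UL z \<in> carrier_mat n n" "UR z \<in> carrier_mat n n"
  "WL z \<in> carrier_mat n n" "WR z \<in> carrier_mat n n"
  using holo_T holo_UL holo_UR holo_WL holo_WR unfolding mat_holo_def by auto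

lemma dim_mats [simp]:
  "dim_row (T z) = n" "dim_col (T z) = n" "dim_row (UL z) = n" "dim_col (UL z) = n"
  "dim_row (UR z) = n" "dim_col (UR z) = n" "dim_row (WL z) = n" "dim_col (WL z) = n"
  "dim_row (WR z) = n" "dim_col (WR z) = n"
  using carrier_matD[OF carrier_mats(1)] carrier_matD[OF carrier_mats(2)] carrier_matD[OF carrier_mats(3)]
    carrier_matD[OF carrier_mats(4)] carrier_matD[OF carrier_mats(5)] by blast+

lemmas analytic_at_center =
  mat_holo_imp_mat_analytic_at[OF holo_T open_ball center_in_ball]
  mat_holo_imp_mat_analytic_at[OF holo_UL open_ball center_in_ball]
  mat_holo_imp_mat_analytic_at[OF holo_WL open_ball center_in_ball]
  mat_holo_imp_mat_analytic_at[OF holo_WR open_ball center_in_ball]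

lemma T_eq:
  assumes "z \<in> ball l0 e"
  shows "T z = WL z * mat_diag n (\<lambda>i. (z - l0) ^ m i) * WR z"
  using mult_cancel_inverse_sides[OF carrier_mats(2)[of z] carrier_mats(1)[of z] carrier_mats(3-5)[of z]
      WL_UL[OF assms] UR_WR[OF assms]] smith[OF assms]
  by simp

definition nullity :: nat where
  "nullity = card {j. j < n \<and> 0 < m j}"

lemma nullity_le: "nullity \<le> n"
  unfolding nullity_def by (rule order.trans[OF card_mono[of "{..<n}"]]) auto

lemma less_nullity_iff: "j < n \<Longrightarrow> j < nullity \<longleftrightarrow> 0 < m j"
  unfolding nullity_def using antitone by (intro card_less_iff_of_downward_closed) force+

lemma kernel_dim_T: "kernel_dim (T l0) = nullity"
proof -
  have "kernel_dim (T l0) = kernel_dim (UL l0 * T l0 * UR l0)"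
    by (rule kernel_dim_mult_invertible[symmetric, where n = n and Q = "WL l0" and C = "WR l0"])
       (auto simp: WL_UL[OF center_in_ball] UR_WR[OF center_in_ball])
  also have "\<dots> = kernel_dim (mat_diag n (\<lambda>i. (0::complex) ^ m i))"
    using smith[OF center_in_ball] by simp
  also have "\<dots> = nullity"
    unfolding nullity_def by (rule kernel_dim_mat_diag_zero_power[OF antitone])
  finally show ?thesis .
qed

lemma transpose: "local_smith_form l0 e n m (\<lambda>z. transpose_mat (T z))
    (\<lambda>z. transpose_mat (UR z)) (\<lambda>z. transpose_mat (UL z))
    (\<lambda>z. transpose_mat (WR z)) (\<lambda>z. transpose_mat (WL z))"
proof
  fix z assume z: "z \<in> ball l0 e"
  show "transpose_mat (WR z) * transpose_mat (UR z) = 1\<^sub>m n"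
    using transpose_mult[of "UR z" n n "WR z" n] UR_WR[OF z] by simp
  show "transpose_mat (UL z) * transpose_mat (WL z) = 1\<^sub>m n"
    using transpose_mult[of "WL z" n n "UL z" n] WL_UL[OF z] by simp
  have "transpose_mat (UL z * T z * UR z) = transpose_mat (UR z) * transpose_mat (UL z * T z)"
    using mult_carrier_mat[OF carrier_mats(2,1)] by (intro transpose_mult[of _ n n _ n]) auto
  also have "transpose_mat (UL z * T z) = transpose_mat (T z) * transpose_mat (UL z)"
    by (rule transpose_mult[of _ n n _ n]) auto
  finally have "transpose_mat (UL z * T z * UR z) = transpose_mat (UR z) * transpose_mat (T z) * transpose_mat (UL z)"
    by (simp add: assoc_mult_mat[of _ n n _ n _ n])
  thus "transpose_mat (UR z) * transpose_mat (T z) * transpose_mat (UL z) = mat_diag n (\<lambda>i. (z - l0) ^ m i)"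
    using smith[OF z] by simp
qed (use radius_pos antitone holo_T holo_UL holo_UR holo_WL holo_WR in \<open>auto intro: mat_holo_transpose\<close>)

lemma smith_mult_reduced_vec:
  assumes "z \<in> ball l0 e" "v \<in> carrier_vec n"
  shows "mat_diag n (\<lambda>i. (z - l0) ^ m i) *\<^sub>v (WR z *\<^sub>v v) = UL z *\<^sub>v (T z *\<^sub>v v)"
proof -
  have "UR z *\<^sub>v (WR z *\<^sub>v v) = v"
    using UR_WR[OF assms(1)] assms(2) by (simp flip: assoc_mult_mat_vec[of _ n n _ n])
  moreover have "WR z *\<^sub>v v \<in> carrier_vec n"
    by (rule mult_mat_vec_carrier[OF carrier_mats(5) assms(2)])
  hence "UR z *\<^sub>v (WR z *\<^sub>v v) \<in> carrier_vec n" "WR z *\<^sub>v v \<in> carrier_vec n"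
    by (auto intro: mult_mat_vec_carrier[OF carrier_mats(3)])
  hence "(UL z * T z * UR z) *\<^sub>v (WR z *\<^sub>v v) = UL z *\<^sub>v (T z *\<^sub>v (UR z *\<^sub>v (WR z *\<^sub>v v)))"
    using assoc_mult_mat_vec[OF mult_carrier_mat[OF carrier_mats(2)[of z] carrier_mats(1)[of z]] carrier_mats(3)]
      assoc_mult_mat_vec[OF carrier_mats(2)[of z] carrier_mats(1)[of z]] by simp
  ultimately have "UL z *\<^sub>v (T z *\<^sub>v v) = (UL z * T z * UR z) *\<^sub>v (WR z *\<^sub>v v)" by simp
  thus ?thesis using smith[OF assms(1)] by simp
qed

lemma reduced_root_vanishes:
  assumes y: "vec_holo (ball l0 e) n y" and k: "enat k \<le> root_mult l0 n T y" and j: "j < n"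
  shows "vanishes_to_order l0 k (\<lambda>z. (z - l0) ^ m j * (WR z *\<^sub>v y z) $ j)"
proof -
  have yc: "y z \<in> carrier_vec n" for z using y by (simp add: vec_holo_def)
  have ya: "(\<lambda>z. y z $ i) analytic_on {l0}" if "i < n" for i
    by (rule vec_holo_analytic_at[OF y _ _ that]) (use radius_pos in auto)
  have "vanishes_to_order l0 k (\<lambda>z. (T z *\<^sub>v y z) $ i)" if "i < n" for i
    using k that unfolding root_mult_def
    by (intro vec_zero_order_vanishes_to_order analytic_on_mult_mat_vec_index[OF analytic_at_center(1)])
       (auto simp: yc ya)
  hence "vanishes_to_order l0 k (\<lambda>z. \<Sum>i<n. UL z $$ (j, i) * (T z *\<^sub>v y z) $ i)"
    using mat_analytic_atD(2)[OF analytic_at_center(2) j]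
    by (intro vanishes_to_order_sum vanishes_to_order_mult) auto
  moreover have "\<forall>\<^sub>F z in nhds l0. z \<in> ball l0 e"
    using radius_pos by (intro eventually_nhds_in_open) auto
  hence "\<forall>\<^sub>F z in nhds l0. (\<Sum>i<n. UL z $$ (j, i) * (T z *\<^sub>v y z) $ i) =
      (z - l0) ^ m j * (WR z *\<^sub>v y z) $ j"
  proof eventually_elim
    case (elim z)
    have "(\<Sum>i<n. UL z $$ (j, i) * (T z *\<^sub>v y z) $ i) = (UL z *\<^sub>v (T z *\<^sub>v y z)) $ j"
      by (rule index_mult_mat_vec_sum[symmetric, OF carrier_mats(2) mult_mat_vec_carrier[OF carrier_mats(1) yc] j])
    also have "\<dots> = (z - l0) ^ m j * (WR z *\<^sub>v y z) $ j"
      using smith_mult_reduced_vec[OF elim yc] j yc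
      by (metis carrier_mats(5) index_mat_diag_mult_vec mult_mat_vec_carrier)
    finally show ?case .
  qed
  ultimately show ?thesis by (rule vanishes_to_order_cong)
qed

lemma reduced_root_zero_at_center:
  assumes y: "vec_holo (ball l0 e) n y" and k: "enat k \<le> root_mult l0 n T y"
    and j: "j < n" "m j < k"
  shows "(WR l0 *\<^sub>v y l0) $ j = 0"
proof (rule vanishes_to_order_Suc_imp_zero[where g = "\<lambda>z. (WR z *\<^sub>v y z) $ j"])
  show "vanishes_to_order l0 (Suc (m j)) (\<lambda>z. (z - l0) ^ m j * (WR z *\<^sub>v y z) $ j)"
    by (rule vanishes_to_order_mono[OF reduced_root_vanishes[OF y k j(1)]]) (use j(2) in simp)
  show "(\<lambda>z. (WR z *\<^sub>v y z) $ j) analytic_on {l0}"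
    using y j(1) radius_pos
    by (intro analytic_on_mult_mat_vec_index[OF analytic_at_center(4)] vec_holo_analytic_at[OF y])
       (auto simp: vec_holo_def)
qed

lemma right_canonicalD:
  assumes "right_canonical \<Omega> l0 n T m Y"
  shows "mat_holo \<Omega> n nullity Y"
    and "q < nullity \<Longrightarrow> root_function \<Omega> l0 n T (\<lambda>z. col (Y z) q)"
    and "c \<in> carrier_vec nullity \<Longrightarrow> Y l0 *\<^sub>v c = 0\<^sub>v n \<Longrightarrow> c = 0\<^sub>v nullity"
    and "(\<Sum>q<nullity. root_mult l0 n T (\<lambda>z. col (Y z) q)) = enat (\<Sum>q<nullity. m q)"
    and "q \<le> q' \<Longrightarrow> q' < nullity \<Longrightarrow>
      root_mult l0 n T (\<lambda>z. col (Y z) q') \<le> root_mult l0 n T (\<lambda>z. col (Y z) q)"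
  using assms unfolding right_canonical_def Let_def kernel_dim_T by auto

lemma right_canonical_reduced_injective:
  assumes "right_canonical \<Omega> l0 n T m Y"
    and c: "c \<in> carrier_vec nullity" "(WR l0 * Y l0) *\<^sub>v c = 0\<^sub>v n"
  shows "c = 0\<^sub>v nullity"
proof (rule right_canonicalD(3)[OF assms(1) c(1)])
  have Y: "Y l0 \<in> carrier_mat n nullity"
    using right_canonicalD(1)[OF assms(1)] unfolding mat_holo_def by blast
  have "Y l0 = UR l0 * (WR l0 * Y l0)"
    using UR_WR[OF center_in_ball] Y by (simp add: assoc_mult_mat[of _ n n _ n _ nullity, symmetric])
  hence "Y l0 *\<^sub>v c = (UR l0 * (WR l0 * Y l0)) *\<^sub>v c" by (rule arg_cong)
  also have "\<dots> = UR l0 *\<^sub>v ((WR l0 * Y l0) *\<^sub>v c)"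
    by (rule assoc_mult_mat_vec[OF carrier_mats(3) mult_carrier_mat[OF carrier_mats(5) Y] c(1)])
  also have "\<dots> = 0\<^sub>v n"
    unfolding c(2) using carrier_mats(3)[of l0] by (intro eq_vecI) (auto simp: scalar_prod_def)
  finally show "Y l0 *\<^sub>v c = 0\<^sub>v n" .
qed

lemma right_canonical_root_mult:
  assumes rc: "right_canonical \<Omega> l0 n T m Y" and \<Omega>: "ball l0 e \<subseteq> \<Omega>" and q: "q < nullity"
  shows "root_mult l0 n T (\<lambda>z. col (Y z) q) = enat (m q)"
proof -
  note R = right_canonicalD[OF rc]
  define \<nu> where "\<nu> i = root_mult l0 n T (\<lambda>z. col (Y z) i)" for i
  define a where "a i = the_enat (\<nu> i)" for i
  have \<nu>_a: "\<nu> i = enat (a i)" if "i < nullity" for i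
  proof -
    have "\<nu> i \<noteq> \<infinity>" using enat_sum_finite_summand[OF R(4)[folded \<nu>_def]] that by simp
    thus ?thesis unfolding a_def by (cases "\<nu> i") auto
  qed
  have Y: "Y z \<in> carrier_mat n nullity" for z using R(1) unfolding mat_holo_def by blast
  have holo_col: "vec_holo (ball l0 e) n (\<lambda>z. col (Y z) i)" if "i < nullity" for i
    using R(2)[OF that] \<Omega> unfolding root_function_def by (blast intro: vec_holo_subset)
  have zero: "(WR l0 * Y l0) $$ (j, i) = 0" if "j < n" "i < nullity" "m j < a i" for j i
  proof -
    have "enat (a i) \<le> root_mult l0 n T (\<lambda>z. col (Y z) i)"
      using \<nu>_a[OF that(2)] unfolding \<nu>_def by simp
    moreover have "(WR l0 * Y l0) $$ (j, i) = (WR l0 *\<^sub>v col (Y l0) i) $ j"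
      using Y[of l0] that by (intro index_mult_mat_col) auto
    ultimately show ?thesis
      using reduced_root_zero_at_center[OF holo_col[OF that(2)] _ that(1,3)] by simp
  qed
  have a_le: "a i \<le> m i" if "i < nullity" for i
  proof (rule injective_zero_pattern_le[OF _ _ antitone _ zero that])
    show "WR l0 * Y l0 \<in> carrier_mat n nullity" by (rule mult_carrier_mat[OF carrier_mats(5) Y])
    show "c = 0\<^sub>v nullity" if "c \<in> carrier_vec nullity" "(WR l0 * Y l0) *\<^sub>v c = 0\<^sub>v n" for c
      by (rule right_canonical_reduced_injective[OF rc that])
    show "a i' \<le> a i" if "i \<le> i'" "i' < nullity" for i i'
    proof -
      have "\<nu> i' \<le> \<nu> i" using R(5)[OF that] unfolding \<nu>_def .
      thus ?thesis using \<nu>_a[of i] \<nu>_a[of i'] that by simp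
    qed
  qed
  have "enat (\<Sum>i<nullity. a i) = (\<Sum>i<nullity. enat (a i))"
    by (rule sum_enat[symmetric])
  also have "\<dots> = (\<Sum>i<nullity. \<nu> i)" using \<nu>_a by (intro sum.cong) auto
  also have "\<dots> = enat (\<Sum>i<nullity. m i)" using R(4) unfolding \<nu>_def .
  finally have "(\<Sum>i<nullity. a i) = (\<Sum>i<nullity. m i)" by simp
  hence "a q = m q" by (rule sum_mono_inv) (use a_le q in auto)
  thus ?thesis using \<nu>_a[OF q] unfolding \<nu>_def by simp
qed

lemma right_canonical_reduced:
  assumes rc: "right_canonical \<Omega> l0 n T m Y" and \<Omega>: "ball l0 e \<subseteq> \<Omega>"
  shows right_canonical_reduced_vanishes: "\<And>q j. q < nullity \<Longrightarrow> j < n \<Longrightarrow>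
      vanishes_to_order l0 (m q) (\<lambda>z. (z - l0) ^ m j * (WR z * Y z) $$ (j, q))"
    and right_canonical_reduced_lower: "\<And>q j. q < nullity \<Longrightarrow> nullity \<le> j \<Longrightarrow> j < n \<Longrightarrow>
      (WR l0 * Y l0) $$ (j, q) = 0"
    and right_canonical_reduced_det: "det (mat nullity nullity (\<lambda>(j, q). (WR l0 * Y l0) $$ (j, q))) \<noteq> 0"
proof -
  have Y: "Y z \<in> carrier_mat n nullity" for z
    using right_canonicalD(1)[OF rc] unfolding mat_holo_def by blast
  have col: "(WR z * Y z) $$ (j, q) = (WR z *\<^sub>v col (Y z) q) $ j" if "j < n" "q < nullity" for z j q
    using Y[of z] that by (intro index_mult_mat_col) auto
  have holo_col: "vec_holo (ball l0 e) n (\<lambda>z. col (Y z) q)" if "q < nullity" for q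
    using right_canonicalD(2)[OF rc that] \<Omega> unfolding root_function_def by (blast intro: vec_holo_subset)
  have mult: "enat (m q) \<le> root_mult l0 n T (\<lambda>z. col (Y z) q)" if "q < nullity" for q
    using right_canonical_root_mult[OF rc \<Omega> that] by simp
  show lower: "(WR l0 * Y l0) $$ (j, q) = 0" if "q < nullity" "nullity \<le> j" "j < n" for q j
    using reduced_root_zero_at_center[OF holo_col[OF that(1)] mult[OF that(1)] that(3)]
      less_nullity_iff[of j] less_nullity_iff[of q] nullity_le that col[of j q l0] by simp
  show "vanishes_to_order l0 (m q) (\<lambda>z. (z - l0) ^ m j * (WR z * Y z) $$ (j, q))"
    if "q < nullity" "j < n" for q j
    using reduced_root_vanishes[OF holo_col[OF that(1)] mult[OF that(1)] that(2)] col that by simp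
  show "det (mat nullity nullity (\<lambda>(j, q). (WR l0 * Y l0) $$ (j, q))) \<noteq> 0"
    using mult_carrier_mat[OF carrier_mats(5) Y] nullity_le right_canonical_reduced_injective[OF rc] lower
    by (rule det_upper_block_nonzero)
qed

lemma left_canonical_reduced:
  assumes lc: "left_canonical \<Omega> l0 n T m V" and \<Omega>: "ball l0 e \<subseteq> \<Omega>"
  shows left_canonical_reduced_lower: "\<And>p j. p < nullity \<Longrightarrow> nullity \<le> j \<Longrightarrow> j < n \<Longrightarrow>
      (V l0 * WL l0) $$ (p, j) = 0"
    and left_canonical_reduced_det: "det (mat nullity nullity (\<lambda>(p, j). (V l0 * WL l0) $$ (p, j))) \<noteq> 0"
proof -
  interpret tr: local_smith_form l0 e n m "\<lambda>z. transpose_mat (T z)"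
    "\<lambda>z. transpose_mat (UR z)" "\<lambda>z. transpose_mat (UL z)"
    "\<lambda>z. transpose_mat (WR z)" "\<lambda>z. transpose_mat (WL z)"
    by (rule transpose)
  have nullity: "tr.nullity = nullity" unfolding nullity_def tr.nullity_def ..
  have rc: "right_canonical \<Omega> l0 n (\<lambda>z. transpose_mat (T z)) m (\<lambda>z. transpose_mat (V z))"
    using lc tr.kernel_dim_T kernel_dim_T nullity by (intro left_canonical_transpose) auto
  have V: "V l0 \<in> carrier_mat nullity n"
    using lc unfolding left_canonical_def Let_def kernel_dim_T mat_holo_def by blast
  have tr_eq: "transpose_mat (WL l0) * transpose_mat (V l0) = transpose_mat (V l0 * WL l0)"
    using transpose_mult[OF V carrier_mats(4)] by simp
  show "(V l0 * WL l0) $$ (p, j) = 0" if "p < nullity" "nullity \<le> j" "j < n" for p j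
    using tr.right_canonical_reduced_lower[OF rc \<Omega>, of p j] that V nullity unfolding tr_eq by simp
  have "mat nullity nullity (\<lambda>(p, j). (V l0 * WL l0) $$ (p, j)) =
      transpose_mat (mat nullity nullity (\<lambda>(j, p). (transpose_mat (WL l0) * transpose_mat (V l0)) $$ (j, p)))"
    unfolding tr_eq using V nullity_le by (intro eq_matI) auto
  thus "det (mat nullity nullity (\<lambda>(p, j). (V l0 * WL l0) $$ (p, j))) \<noteq> 0"
    using tr.right_canonical_reduced_det[OF rc \<Omega>] nullity by (simp add: det_transpose[OF mat_carrier])
qed

lemma right_canonical_analytic:
  assumes "right_canonical \<Omega> l0 n T m Y" "ball l0 e \<subseteq> \<Omega>"
  shows "mat_analytic_at l0 n nullity Y"
  using mat_holo_subset[OF right_canonicalD(1)[OF assms(1)] assms(2)]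
  by (rule mat_holo_imp_mat_analytic_at) (use radius_pos in auto)

lemma right_canonical_quotient:
  assumes rc: "right_canonical \<Omega> l0 n T m Y" and \<Omega>: "ball l0 e \<subseteq> \<Omega>"
  obtains G where "mat_analytic_at l0 n nullity G"
    "\<forall>\<^sub>F z in nhds l0. mat_diag n (\<lambda>i. (z - l0) ^ m i) * (WR z * Y z) =
       G z * mat_diag nullity (\<lambda>i. (z - l0) ^ m i)"
    "det (mat nullity nullity (\<lambda>(j, q). G l0 $$ (j, q))) \<noteq> 0"
proof -
  define Y' where "Y' z = WR z * Y z" for z
  have Y': "mat_analytic_at l0 n nullity Y'"
    unfolding Y'_def by (rule mat_analytic_at_mult[OF analytic_at_center(4) right_canonical_analytic[OF assms]])
  have Y'c: "Y' z \<in> carrier_mat n nullity" for z by (rule mat_analytic_atD(1)[OF Y'])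
  have DY': "mat_diag n (\<lambda>i. (z - l0) ^ m i) * Y' z = mat n nullity (\<lambda>(j, q). (z - l0) ^ m j * Y' z $$ (j, q))"
    for z by (rule mat_diag_mult_left[OF Y'c])
  obtain G where G: "mat_analytic_at l0 n nullity G"
    "\<forall>\<^sub>F z in nhds l0. mat_diag n (\<lambda>i. (z - l0) ^ m i) * Y' z = G z * mat_diag nullity (\<lambda>i. (z - l0) ^ m i)"
  proof (rule vanishing_columns_factor)
    show "mat_diag n (\<lambda>i. (z - l0) ^ m i) * Y' z \<in> carrier_mat n nullity" for z
      by (rule mult_carrier_mat[OF mat_diag_dim Y'c])
    show "vanishes_to_order l0 (m q) (\<lambda>z. (mat_diag n (\<lambda>i. (z - l0) ^ m i) * Y' z) $$ (j, q))"
      if "j < n" "q < nullity" for j q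
      using right_canonical_reduced_vanishes[OF rc \<Omega> that(2,1), folded Y'_def] that by (simp add: DY')
  qed
  have "det (mat nullity nullity (\<lambda>(j, q). Y' l0 $$ (j, q))) = det (mat nullity nullity (\<lambda>(j, q). G l0 $$ (j, q)))"
  proof (rule det_eq_if_diag_similar[where d = "\<lambda>z i. (z - l0) ^ m i"])
    show "mat_analytic_at l0 nullity nullity (\<lambda>z. mat nullity nullity (\<lambda>(j, q). Y' z $$ (j, q)))"
      "mat_analytic_at l0 nullity nullity (\<lambda>z. mat nullity nullity (\<lambda>(j, q). G z $$ (j, q)))"
      using mat_analytic_at_upper_block[OF Y' nullity_le] mat_analytic_at_upper_block[OF G(1) nullity_le]
      by simp_all
    show "\<forall>\<^sub>F z in at l0.
        mat_diag nullity (\<lambda>i. (z - l0) ^ m i) * mat nullity nullity (\<lambda>(j, q). Y' z $$ (j, q)) =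
          mat nullity nullity (\<lambda>(j, q). G z $$ (j, q)) * mat_diag nullity (\<lambda>i. (z - l0) ^ m i) \<and>
        (\<forall>i<nullity. (z - l0) ^ m i \<noteq> 0)"
      using eventually_at_if_nhds[OF G(2)] eventually_neq_at_within[of l0 l0 UNIV]
    proof eventually_elim
      case (elim z)
      thus ?case
        using mat_diag_upper_block_commute[OF Y'c mat_analytic_atD(1)[OF G(1)] nullity_le elim(1)] by simp
    qed
  qed
  with right_canonical_reduced_det[OF rc \<Omega>] have "det (mat nullity nullity (\<lambda>(j, q). G l0 $$ (j, q))) \<noteq> 0"
    unfolding Y'_def by simp
  with G that show ?thesis unfolding Y'_def by blast
qed

lemma canonical_product_factorization:
  assumes lc: "left_canonical \<Omega> l0 n T m V" and rc: "right_canonical \<Omega> l0 n T m Y"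
    and \<Omega>: "ball l0 e \<subseteq> \<Omega>"
  obtains X where "mat_analytic_at l0 nullity nullity X" "det (X l0) \<noteq> 0"
    "\<forall>\<^sub>F z in nhds l0. V z * T z * Y z = X z * mat_diag nullity (\<lambda>i. (z - l0) ^ m i)"
proof -
  obtain G where G: "mat_analytic_at l0 n nullity G"
    "\<forall>\<^sub>F z in nhds l0. mat_diag n (\<lambda>i. (z - l0) ^ m i) * (WR z * Y z) =
       G z * mat_diag nullity (\<lambda>i. (z - l0) ^ m i)"
    "det (mat nullity nullity (\<lambda>(j, q). G l0 $$ (j, q))) \<noteq> 0"
    by (rule right_canonical_quotient[OF rc \<Omega>])
  have V: "mat_holo \<Omega> nullity n V"
    using lc unfolding left_canonical_def Let_def kernel_dim_T by blast
  have V': "mat_analytic_at l0 nullity n (\<lambda>z. V z * WL z)"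
    using mat_holo_imp_mat_analytic_at[OF mat_holo_subset[OF V \<Omega>]] radius_pos
    by (intro mat_analytic_at_mult[OF _ analytic_at_center(3)]) auto
  define X where "X z = V z * WL z * G z" for z
  have X: "mat_analytic_at l0 nullity nullity X"
    unfolding X_def by (rule mat_analytic_at_mult[OF V' G(1)])
  have "X l0 = mat nullity nullity (\<lambda>(p, j). (V l0 * WL l0) $$ (p, j)) *
      mat nullity nullity (\<lambda>(j, q). G l0 $$ (j, q))"
    unfolding X_def using left_canonical_reduced_lower[OF lc \<Omega>] nullity_le
    by (intro mult_eq_mult_upper_blocks[OF mat_analytic_atD(1)[OF V'] mat_analytic_atD(1)[OF G(1)]])
  hence "det (X l0) \<noteq> 0"
    using left_canonical_reduced_det[OF lc \<Omega>] G(3) by (simp add: det_mult[of _ nullity])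
  moreover have "\<forall>\<^sub>F z in nhds l0. z \<in> ball l0 e"
    using radius_pos by (intro eventually_nhds_in_open) auto
  hence "\<forall>\<^sub>F z in nhds l0. V z * T z * Y z = X z * mat_diag nullity (\<lambda>i. (z - l0) ^ m i)"
    using G(2)
  proof eventually_elim
    case (elim z)
    have "V z * T z * Y z = V z * (WL z * mat_diag n (\<lambda>i. (z - l0) ^ m i) * WR z) * Y z"
      using T_eq[OF elim(1)] by simp
    also have "\<dots> = V z * WL z * (mat_diag n (\<lambda>i. (z - l0) ^ m i) * (WR z * Y z))"
      using V right_canonicalD(1)[OF rc]
      by (intro mult_mat_regroup[of _ nullity n _ _ _ _ nullity]) (auto simp: mat_holo_def)
    also have "\<dots> = X z * mat_diag nullity (\<lambda>i. (z - l0) ^ m i)"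
      unfolding elim(2) X_def
      using assoc_mult_mat[OF mat_analytic_atD(1)[OF V'] mat_analytic_atD(1)[OF G(1)] mat_diag_dim] by simp
    finally show ?case .
  qed
  ultimately show ?thesis using that X by blast
qed

end

lemma partial_multiplicities_local_smith_form:
  assumes "open \<Omega>" "l0 \<in> \<Omega>" "mat_holo \<Omega> n n T" "partial_multiplicities l0 n T m"
  obtains e UL UR WL WR where "ball l0 e \<subseteq> \<Omega>" "local_smith_form l0 e n m T UL UR WL WR"
proof -
  obtain UL UR e0 where U: "unimodular_at l0 n UL" "unimodular_at l0 n UR" "e0 > 0"
    and smith: "\<forall>z\<in>ball l0 e0. UL z * T z * UR z = diag_fun n (\<lambda>i. (z - l0) ^ m i)"
    and antitone: "\<forall>i j. i \<le> j \<longrightarrow> j < n \<longrightarrow> m j \<le> m i"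
    using assms(4) unfolding partial_multiplicities_def by (elim conjE exE) auto
  obtain e1 WL where e1: "e1 > 0" "mat_holo (ball l0 e1) n n UL" "mat_holo (ball l0 e1) n n WL"
    "\<forall>z\<in>ball l0 e1. WL z * UL z = 1\<^sub>m n"
    using U(1) unfolding unimodular_at_def by (elim conjE exE) auto
  obtain e2 WR where e2: "e2 > 0" "mat_holo (ball l0 e2) n n UR" "mat_holo (ball l0 e2) n n WR"
    "\<forall>z\<in>ball l0 e2. UR z * WR z = 1\<^sub>m n"
    using U(2) unfolding unimodular_at_def by (elim conjE exE) auto
  obtain e3 where e3: "e3 > 0" "ball l0 e3 \<subseteq> \<Omega>" using assms(1,2) open_contains_ball by blast
  define e where "e = min (min e0 e1) (min e2 e3)"
  have sub: "ball l0 e \<subseteq> ball l0 e0" "ball l0 e \<subseteq> ball l0 e1" "ball l0 e \<subseteq> ball l0 e2"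
    "ball l0 e \<subseteq> ball l0 e3"
    unfolding e_def by auto
  have "local_smith_form l0 e n m T UL UR WL WR"
  proof
    show "0 < e" using U(3) e1(1) e2(1) e3(1) unfolding e_def by simp
    show "mat_holo (ball l0 e) n n T" using assms(3) sub(4) e3(2) by (blast intro: mat_holo_subset)
    show "mat_holo (ball l0 e) n n UL" "mat_holo (ball l0 e) n n WL"
      using e1(2,3) sub(2) by (blast intro: mat_holo_subset)+
    show "mat_holo (ball l0 e) n n UR" "mat_holo (ball l0 e) n n WR"
      using e2(2,3) sub(3) by (blast intro: mat_holo_subset)+
    show "WL z * UL z = 1\<^sub>m n" "UR z * WR z = 1\<^sub>m n"
      "UL z * T z * UR z = mat_diag n (\<lambda>i. (z - l0) ^ m i)" if "z \<in> ball l0 e" for z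
      using that sub e1(4) e2(4) smith by (auto simp: diag_fun_eq_mat_diag)
    show "m j \<le> m i" if "i \<le> j" "j < n" for i j using antitone that by blast
  qed
  with sub(4) e3(2) that show ?thesis by blast
qed

theorem mainTheorem6:
  fixes \<Omega> :: "complex set" and l0 :: complex and n :: nat
    and T V Y :: "complex \<Rightarrow> complex mat" and m :: "nat \<Rightarrow> nat"
  assumes "open \<Omega>" and "l0 \<in> \<Omega>"
    and "mat_holo \<Omega> n n T"
    and "\<exists>z\<in>\<Omega>. det (T z) \<noteq> 0"
    and "det (T l0) = 0"
    and "partial_multiplicities l0 n T m"
    and "left_canonical \<Omega> l0 n T m V"
    and "right_canonical \<Omega> l0 n T m Y"
  defines "r \<equiv> kernel_dim (T l0)"
  defines "\<Delta>inv \<equiv> (\<lambda>z. diag_fun r (\<lambda>i. inverse ((z - l0) ^ m i)))"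
  shows "mero_invertible l0 (\<lambda>z. V z * T z * Y z) \<and>
    (mero_congr l0 r r (\<lambda>z. \<Delta>inv z * (V z * T z * Y z) * \<Delta>inv z) \<Delta>inv \<longleftrightarrow>
     mero_congr l0 r r (\<lambda>z. mat_inv (V z * T z * Y z)) \<Delta>inv)"
proof -
  obtain e UL UR WL WR where \<Omega>: "ball l0 e \<subseteq> \<Omega>" and smith: "local_smith_form l0 e n m T UL UR WL WR"
    using partial_multiplicities_local_smith_form[OF assms(1-3,6)] by blast
  interpret local_smith_form l0 e n m T UL UR WL WR by (rule smith)
  obtain X where X: "mat_analytic_at l0 r r X" "det (X l0) \<noteq> 0"
    and VTY: "\<forall>\<^sub>F z in nhds l0. V z * T z * Y z = X z * mat_diag r (\<lambda>i. (z - l0) ^ m i)"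
    unfolding r_def kernel_dim_T by (rule canonical_product_factorization[OF assms(7,8) \<Omega>])
  have "\<forall>\<^sub>F z in at l0. V z * T z * Y z = X z * mat_diag r (\<lambda>i. (z - l0) ^ m i) \<and>
      (\<forall>i<r. (z - l0) ^ m i \<noteq> 0)"
    using eventually_at_if_nhds[OF VTY] eventually_neq_at_within[of l0 l0 UNIV]
    by eventually_elim simp
  from mero_diag_factor[OF X this] show ?thesis
    unfolding \<Delta>inv_def diag_fun_eq_mat_diag .
qed

end
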